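(* Let $H_0,H_1$ be complex Hilbert spaces, $G$ a densely defined closed operator from $H_0$ into $H_1$ and $D$ a densely defined closed operator from $H_1$ into $H_0$ with $-G^*\subset D$. Let $a\in\mathcal{L}(H_1)$ and $m\in\mathcal{L}(H_0)$ be coercive, and let $\Lambda\colon \mathrm{BD}(G)\to\mathrm{BD}(D)$ be the Dirichlet-to-Neumann operator associated with $-DaG+m$. Then $\Lambda$ is bounded and invertible. Moreover, \[ \Lambda u_0=\begin{pmatrix}0 & \pi_{\mathrm{BD}(D)}\end{pmatrix}\begin{pmatrix} m & -D\\ -\mathring{G} & a^{-1}\end{pmatrix}^{-1}\begin{pmatrix}-m\\ G\end{pmatrix}u_0 \] for all $u_0\in\mathrm{BD}(G)$, and \[ \Lambda^{-1} q_0=\begin{pmatrix}\pi_{\mathrm{BD}(G)} & 0\end{pmatrix}\begin{pmatrix} m & -\mathring{D}\\ -G & a^{-1}\end{pmatrix}^{-1}\begin{pmatrix}D\\ -a^{-1}\end{pmatrix}q_0 \] for all $q_0\in\mathrm{BD}(D)$. Here the first matrix operator acts in $H_0\times H_1$ with domain $\mathrm{dom}(\mathring G)\times\mathrm{dom}(D)$ and the second with domain $\mathrm{dom}(G)\times\mathrm{dom}(\mathring D)$; both are invertible.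
   Context: Put $\mathring D=-G^*$ and $\mathring G=-D^*$ (so $\mathring G\subset G$, $\mathring D\subset D$). The domain of an operator is equipped with its graph inner product, e.g. $(u,v)_{\mathrm{dom}(G)}=(u,v)_{H_0}+(Gu,Gv)_{H_1}$. $\mathrm{BD}(G)$ is the orthogonal complement of $\mathrm{dom}(\mathring G)$ in $\mathrm{dom}(G)$ (with respect to the graph inner product), and $\mathrm{BD}(D)$ the orthogonal complement of $\mathrm{dom}(\mathring D)$ in $\mathrm{dom}(D)$; they carry the induced inner products, and $\pi_{\mathrm{BD}(G)}\colon\mathrm{dom}(G)\to\mathrm{BD}(G)$, $\pi_{\mathrm{BD}(D)}\colon\mathrm{dom}(D)\to\mathrm{BD}(D)$ are the orthogonal projections. A bounded operator $M$ on a Hilbert space is coercive if there is $\mu>0$ with $\mathrm{Re}(Mx,x)\ge\mu\|x\|^2$ for all $x$. $\mathrm{dom}(DaG)=\{u\in\mathrm{dom}(G): aGu\in\mathrm{dom}(D)\}$. For coercive $a,m$ and $u_0\in\mathrm{BD}(G)$ there is a unique $u\in\mathrm{dom}(DaG)$ with $mu-DaGu=0$ and $u-u_0\in\mathrm{dom}(\mathring G)$; the Dirichlet-to-Neumann operator associated with $-DaG+m$ is defined by $\Lambda u_0=\pi_{\mathrm{BD}(D)}(aGu)$. *)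

theory Defs
  imports "HOL-Analysis.Analysis"
begin

class complex_vec = real_vector +
  fixes scaleC :: "complex \<Rightarrow> 'a \<Rightarrow> 'a" (infixr \<open>*\<^sub>C\<close> 75)
  assumes scaleC_add_right: "c *\<^sub>C (x + y) = c *\<^sub>C x + c *\<^sub>C y"
    and scaleC_add_left: "(c + d) *\<^sub>C x = c *\<^sub>C x + d *\<^sub>C x"
    and scaleC_scaleC: "c *\<^sub>C (d *\<^sub>C x) = (c * d) *\<^sub>C x"
    and scaleC_one: "1 *\<^sub>C x = x"
    and scaleR_scaleC: "r *\<^sub>R x = complex_of_real r *\<^sub>C x"

class chilbert = complex_vec + real_normed_vector + complete_space +
  fixes cinner :: "'a \<Rightarrow> 'a \<Rightarrow> complex"
  assumes cinner_add_left: "cinner (x + y) z = cinner x z + cinner y z"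
    and cinner_scaleC_left: "cinner (c *\<^sub>C x) y = c * cinner x y"
    and cinner_commute: "cinner x y = cnj (cinner y x)"
    and cinner_self_norm: "cinner x x = complex_of_real ((norm x)\<^sup>2)"

definition lin_op :: "('a::chilbert \<times> 'b::chilbert) set \<Rightarrow> bool" where
  "lin_op A \<longleftrightarrow> (0, 0) \<in> A
     \<and> (\<forall>x y u v. (x, y) \<in> A \<longrightarrow> (u, v) \<in> A \<longrightarrow> (x + u, y + v) \<in> A)
     \<and> (\<forall>c x y. (x, y) \<in> A \<longrightarrow> (c *\<^sub>C x, c *\<^sub>C y) \<in> A)
     \<and> (\<forall>y. (0, y) \<in> A \<longrightarrow> y = 0)"

text \<open>domain of an operator: Domain A (the relational domain of the graph)\<close>

definition op_app :: "('a \<times> 'b) set \<Rightarrow> 'a \<Rightarrow> 'b" where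
  "op_app A x = (THE y. (x, y) \<in> A)"

definition densely_defined :: "('a::chilbert \<times> 'b::chilbert) set \<Rightarrow> bool" where
  "densely_defined A \<longleftrightarrow> closure (Domain A) = UNIV"

definition closed_op :: "('a::chilbert \<times> 'b::chilbert) set \<Rightarrow> bool" where
  "closed_op A \<longleftrightarrow> lin_op A \<and> closed A"

definition adj :: "('a::chilbert \<times> 'b::chilbert) set \<Rightarrow> ('b \<times> 'a) set" where
  "adj A = {(y, z). \<forall>x w. (x, w) \<in> A \<longrightarrow> cinner w y = cinner x z}"

definition neg_op :: "('a \<times> 'b::ab_group_add) set \<Rightarrow> ('a \<times> 'b) set" where
  "neg_op A = {(x, - y) | x y. (x, y) \<in> A}"

definition ringD :: "('a::chilbert \<times> 'b::chilbert) set \<Rightarrow> ('b \<times> 'a) set" where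
  "ringD G = neg_op (adj G)"

definition ringG :: "('b::chilbert \<times> 'a::chilbert) set \<Rightarrow> ('a \<times> 'b) set" where
  "ringG D = neg_op (adj D)"

definition graph_inner :: "('a::chilbert \<times> 'b::chilbert) set \<Rightarrow> 'a \<Rightarrow> 'a \<Rightarrow> complex" where
  "graph_inner A u v = cinner u v + cinner (op_app A u) (op_app A v)"

definition graph_norm :: "('a::chilbert \<times> 'b::chilbert) set \<Rightarrow> 'a \<Rightarrow> real" where
  "graph_norm A u = sqrt ((norm u)\<^sup>2 + (norm (op_app A u))\<^sup>2)"

definition BD :: "('a::chilbert \<times> 'b::chilbert) set \<Rightarrow> ('a \<times> 'b) set \<Rightarrow> 'a set" where
  "BD A A0 = {u \<in> Domain A. \<forall>v \<in> Domain A0. graph_inner A v u = 0}"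

definition proj_BD :: "('a::chilbert \<times> 'b::chilbert) set \<Rightarrow> ('a \<times> 'b) set \<Rightarrow> 'a \<Rightarrow> 'a" where
  "proj_BD A A0 u = (THE w. w \<in> BD A A0 \<and> (\<forall>v \<in> BD A A0. graph_inner A (u - w) v = 0))"

definition bounded_clop :: "('a::chilbert \<Rightarrow> 'b::chilbert) \<Rightarrow> bool" where
  "bounded_clop f \<longleftrightarrow> (\<forall>x y. f (x + y) = f x + f y) \<and> (\<forall>c x. f (c *\<^sub>C x) = c *\<^sub>C f x)
     \<and> (\<exists>K. \<forall>x. norm (f x) \<le> K * norm x)"

definition coercive :: "('a::chilbert \<Rightarrow> 'a) \<Rightarrow> bool" where
  "coercive f \<longleftrightarrow> (\<exists>\<mu>>0. \<forall>x. Re (cinner (f x) x) \<ge> \<mu> * (norm x)\<^sup>2)"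

definition dtn_sol :: "('a::chilbert \<times> 'b::chilbert) set \<Rightarrow> ('b \<times> 'a) set
    \<Rightarrow> ('b \<Rightarrow> 'b) \<Rightarrow> ('a \<Rightarrow> 'a) \<Rightarrow> 'a \<Rightarrow> 'a" where
  "dtn_sol G D a m u0 = (THE u. u \<in> Domain G \<and> a (op_app G u) \<in> Domain D
       \<and> m u - op_app D (a (op_app G u)) = 0 \<and> u - u0 \<in> Domain (ringG D))"

definition DtN :: "('a::chilbert \<times> 'b::chilbert) set \<Rightarrow> ('b \<times> 'a) set
    \<Rightarrow> ('b \<Rightarrow> 'b) \<Rightarrow> ('a \<Rightarrow> 'a) \<Rightarrow> 'a \<Rightarrow> 'b" where
  "DtN G D a m u0 = proj_BD D (ringD G) (a (op_app G (dtn_sol G D a m u0)))"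

text \<open>(m, -D; -ring-G, a^-1) with domain dom(ring-G) x dom(D)\<close>
definition mat1 :: "('a::chilbert \<times> 'b::chilbert) set \<Rightarrow> ('b \<times> 'a) set
    \<Rightarrow> ('b \<Rightarrow> 'b) \<Rightarrow> ('a \<Rightarrow> 'a) \<Rightarrow> 'a \<times> 'b \<Rightarrow> 'a \<times> 'b" where
  "mat1 G D a m p = (m (fst p) - op_app D (snd p),
                     - op_app (ringG D) (fst p) + inv a (snd p))"

text \<open>(m, -ring-D; -G, a^-1) with domain dom(G) x dom(ring-D)\<close>
definition mat2 :: "('a::chilbert \<times> 'b::chilbert) set \<Rightarrow> ('b \<times> 'a) set
    \<Rightarrow> ('b \<Rightarrow> 'b) \<Rightarrow> ('a \<Rightarrow> 'a) \<Rightarrow> 'a \<times> 'b \<Rightarrow> 'a \<times> 'b" where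
  "mat2 G D a m p = (m (fst p) - op_app (ringD G) (snd p),
                     - op_app G (fst p) + inv a (snd p))"

end

theory Submission
  imports Defs
begin

text \<open>Both block operator matrices have the form \<open>M = (m, -T; T\<^sup>*, b)\<close> with \<open>T\<close> closed and
  \<open>m\<close>, \<open>b = a\<^sup>-\<^sup>1\<close> coercive: \<open>T = D\<close> for \<^const>\<open>mat1\<close>, and \<open>T = ring-D\<close>, whose adjoint is \<open>-G\<close>,
  for \<^const>\<open>mat2\<close>. The off-diagonal part is skew, so \<open>Re \<langle>M p, p\<rangle> \<ge> c |p|\<^sup>2\<close>; hence \<open>M\<close> is
  bounded below with closed graph, and a vector orthogonal to its range is killed by the same
  computation for the formal adjoint. So \<open>M\<close> is bijective with bounded inverse.

  For \<open>u0 \<in> BD(G)\<close> the solution is \<open>u = u0 + w\<close> with \<open>(w, a G u) = mat1\<^sup>-\<^sup>1 (-m u0, G u0)\<close>,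
  which is the formula for \<open>\<Lambda>\<close>. Conversely \<open>(w, r) = mat2\<^sup>-\<^sup>1 (D q0, -a\<^sup>-\<^sup>1 q0)\<close> gives a
  solution \<open>w\<close> with \<open>a G w = r + q0\<close> and \<open>r \<in> dom(ring-D)\<close>, so \<open>\<Lambda>\<close> maps the Dirichlet data of
  \<open>w\<close> to \<open>q0\<close>. A solution with zero Neumann data lies in the kernel of \<^const>\<open>mat2\<close>, which
  gives injectivity, and both bounds follow from the bounded inverses and the fact that the
  projections onto boundary data spaces do not increase graph norms.\<close>

section \<open>Complex inner product algebra\<close>

lemma scaleC_zero_right [simp]: "c *\<^sub>C (0::'a::complex_vec) = 0"
proof -
  have "c *\<^sub>C (0::'a) = c *\<^sub>C 0 + c *\<^sub>C 0"
    by (metis add_0 scaleC_add_right)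
  then show ?thesis by simp
qed

lemma scaleC_minus_right: "c *\<^sub>C (- x) = - (c *\<^sub>C (x::'a::complex_vec))"
  by (metis add.inverse_unique add.right_inverse scaleC_add_right scaleC_zero_right)

lemma scaleC_minus_one: "(-1) *\<^sub>C x = - (x::'a::complex_vec)"
  by (metis scaleR_minus1_left scaleR_scaleC of_real_1 of_real_minus)

lemma scaleC_diff_right: "c *\<^sub>C (x - y) = c *\<^sub>C x - c *\<^sub>C (y::'a::complex_vec)"
  by (simp only: diff_conv_add_uminus scaleC_add_right scaleC_minus_right)

lemma cinner_zero_left [simp]: "cinner 0 y = 0"
  by (metis add_cancel_left_left add_0 cinner_add_left)

lemma cinner_minus_left: "cinner (- x) y = - cinner x y"
  by (metis add.inverse_unique add.right_inverse cinner_add_left cinner_zero_left)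

lemma cinner_diff_left: "cinner (x - y) z = cinner x z - cinner y z"
  by (simp only: diff_conv_add_uminus cinner_add_left cinner_minus_left)

lemma cinner_add_right: "cinner z (x + y) = cinner z x + cinner z y"
  by (metis cinner_add_left cinner_commute complex_cnj_add)

lemma cinner_zero_right [simp]: "cinner x 0 = 0"
  by (subst cinner_commute) simp

lemma cinner_minus_right: "cinner x (- y) = - cinner x y"
  by (metis cinner_commute cinner_minus_left complex_cnj_minus)

lemma cinner_diff_right: "cinner x (y - z) = cinner x y - cinner x z"
  by (simp only: diff_conv_add_uminus cinner_add_right cinner_minus_right)

lemma cinner_scaleC_right: "cinner x (c *\<^sub>C y) = cnj c * cinner x y"
  by (metis cinner_commute cinner_scaleC_left complex_cnj_mult)

lemma cinner_scaleR_left: "cinner (r *\<^sub>R x) y = complex_of_real r * cinner x y"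
  by (simp only: scaleR_scaleC cinner_scaleC_left)

lemma Re_cinner_commute: "Re (cinner x y) = Re (cinner y x)"
  by (subst cinner_commute) simp

lemma Re_cinner_self: "Re (cinner x x) = (norm x)\<^sup>2"
  by (simp add: cinner_self_norm)

lemma cinner_self_eq_0_iff: "cinner x x = 0 \<longleftrightarrow> x = (0::'a::chilbert)"
  by (simp add: cinner_self_norm)

lemma cinner_eq_if_Re_eq:
  assumes "Re (cinner x y) = Re (cinner x' y')"
    and "Re (cinner (\<i> *\<^sub>C x) y) = Re (cinner (\<i> *\<^sub>C x') y')"
  shows "cinner x y = cinner x' y'"
  using assms by (simp add: cinner_scaleC_left complex_eq_iff)


section \<open>Closed ranges and orthogonal projections\<close>

lemma Cauchy_if_bounded_below:
  fixes T :: "'a::real_normed_vector \<Rightarrow> 'b::real_normed_vector"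
  assumes S: "subspace S"
    and diff: "\<And>x y. x \<in> S \<Longrightarrow> y \<in> S \<Longrightarrow> T (x - y) = T x - T y"
    and below: "\<And>x. x \<in> S \<Longrightarrow> norm x \<le> C * norm (T x)"
    and X: "\<And>n. X n \<in> S" and TX: "Cauchy (\<lambda>n. T (X n))"
  shows "Cauchy X"
proof (rule CauchyI)
  have below': "norm x \<le> (\<bar>C\<bar> + 1) * norm (T x)" if "x \<in> S" for x
  proof -
    have "C * norm (T x) \<le> (\<bar>C\<bar> + 1) * norm (T x)" by (intro mult_right_mono) auto
    then show ?thesis using below[OF that] by linarith
  qed
  fix e :: real
  assume "0 < e"
  then obtain N where N: "\<forall>m\<ge>N. \<forall>n\<ge>N. norm (T (X m) - T (X n)) < e / (\<bar>C\<bar> + 1)"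
    using CauchyD[OF TX, of "e / (\<bar>C\<bar> + 1)"] by auto
  have "norm (X m - X n) < e" if "N \<le> m" "N \<le> n" for m n
  proof -
    have "norm (X m - X n) \<le> (\<bar>C\<bar> + 1) * norm (T (X m) - T (X n))"
      using below'[OF subspace_diff[OF S X X]] by (simp add: diff X)
    also have "\<dots> < e"
      using N that by (simp add: field_simps)
    finally show ?thesis .
  qed
  then show "\<exists>N. \<forall>m\<ge>N. \<forall>n\<ge>N. norm (X m - X n) < e" by blast
qed

lemma closed_image_if_bounded_below:
  fixes T :: "'a::{real_normed_vector,complete_space} \<Rightarrow> 'b::real_normed_vector"
  assumes S: "subspace S"
    and diff: "\<And>x y. x \<in> S \<Longrightarrow> y \<in> S \<Longrightarrow> T (x - y) = T x - T y"
    and below: "\<And>x. x \<in> S \<Longrightarrow> norm x \<le> C * norm (T x)"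
    and closed_graph: "\<And>X x y. (\<forall>n. X n \<in> S) \<Longrightarrow> X \<longlonglongrightarrow> x \<Longrightarrow> (\<lambda>n. T (X n)) \<longlonglongrightarrow> y
      \<Longrightarrow> x \<in> S \<and> T x = y"
  shows "closed (T ` S)"
  unfolding closed_sequential_limits
proof (intro allI impI, elim conjE)
  fix Y y
  assume "\<forall>n. Y n \<in> T ` S" and Y: "Y \<longlonglongrightarrow> y"
  then have "\<forall>n. \<exists>x. x \<in> S \<and> Y n = T x" by blast
  then obtain X where X: "\<And>n. X n \<in> S" "\<And>n. Y n = T (X n)"
    by (metis choice)
  have TX: "(\<lambda>n. T (X n)) \<longlonglongrightarrow> y" using Y by (simp add: X(2)[symmetric])
  obtain x where "X \<longlonglongrightarrow> x"
    using Cauchy_if_bounded_below[OF S diff below X(1) LIMSEQ_imp_Cauchy[OF TX]]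
      Cauchy_convergent convergent_def by blast
  then have "x \<in> S \<and> T x = y" using closed_graph X(1) TX by blast
  then show "y \<in> T ` S" by blast
qed

lemma subspace_image_if_linear_on:
  assumes S: "subspace S"
    and add: "\<And>x y. x \<in> S \<Longrightarrow> y \<in> S \<Longrightarrow> T (x + y) = T x + T y"
    and scale: "\<And>r x. x \<in> S \<Longrightarrow> T (r *\<^sub>R x) = r *\<^sub>R T x"
  shows "subspace (T ` S)"
  unfolding subspace_def
proof (intro conjI ballI allI)
  show "0 \<in> T ` S" using scale[OF subspace_0[OF S], of 0] subspace_0[OF S] by force
  show "u + v \<in> T ` S" if uv: "u \<in> T ` S" "v \<in> T ` S" for u v
  proof -
    obtain x y where "x \<in> S" "y \<in> S" "u = T x" "v = T y" using uv by blast
    then have "u + v = T (x + y)" "x + y \<in> S" by (simp_all add: add subspace_add[OF S])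
    then show ?thesis by (rule image_eqI)
  qed
  show "r *\<^sub>R u \<in> T ` S" if u: "u \<in> T ` S" for r u
  proof -
    obtain x where "x \<in> S" "u = T x" using u by blast
    then have "r *\<^sub>R u = T (r *\<^sub>R x)" "r *\<^sub>R x \<in> S" by (simp_all add: scale subspace_scale[OF S])
    then show ?thesis by (rule image_eqI)
  qed
qed

text \<open>The projection theorem and the closed-range argument only need the real part of the
  complex inner product; stating them for real inner products lets them apply to
  \<^typ>\<open>'a::chilbert\<close> and to products of such spaces alike.\<close>

locale real_hilbert_space =
  fixes ip :: "'v::{real_normed_vector,complete_space} \<Rightarrow> 'v \<Rightarrow> real"
  assumes ip_commute: "ip x y = ip y x"
    and ip_add_left: "ip (x + y) z = ip x z + ip y z"
    and ip_scaleR_left: "ip (r *\<^sub>R x) y = r * ip x y"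
    and ip_self: "ip x x = (norm x)\<^sup>2"
begin

lemma ip_scaleR_right: "ip y (r *\<^sub>R x) = r * ip y x"
  by (simp only: ip_commute[of y] ip_scaleR_left)

lemma ip_diff_left: "ip (x - y) z = ip x z - ip y z"
  using ip_add_left[of x "(-1) *\<^sub>R y" z] ip_scaleR_left[of "-1" y z] by simp

lemma ip_diff_right: "ip z (x - y) = ip z x - ip z y"
  by (simp only: ip_commute[of z] ip_diff_left)

lemma ip_zero_right [simp]: "ip y 0 = 0"
  using ip_scaleR_right[of y 0 0] by simp

lemma norm_diff_square: "(norm (x - y))\<^sup>2 = (norm x)\<^sup>2 - 2 * ip x y + (norm y)\<^sup>2"
  by (simp add: ip_self[symmetric] ip_diff_left ip_diff_right ip_commute[of y x])

lemma parallelogram_law: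
  fixes x y :: 'v
  shows "(norm (x + y))\<^sup>2 + (norm (x - y))\<^sup>2 = 2 * (norm x)\<^sup>2 + 2 * (norm y)\<^sup>2"
  using norm_diff_square[of x "- y"] norm_diff_square[of x y] ip_scaleR_right[of x "-1" y]
  by simp

lemma abs_ip_le: "\<bar>ip x y\<bar> \<le> norm x * norm y"
proof (cases "y = 0")
  case False
  then have ny: "(norm y)\<^sup>2 > 0" by simp
  define t where "t = ip x y / (norm y)\<^sup>2"
  have "0 \<le> (norm (x - t *\<^sub>R y))\<^sup>2" by simp
  also have "\<dots> = (norm x)\<^sup>2 - 2 * t * ip x y + t\<^sup>2 * (norm y)\<^sup>2"
    by (simp add: norm_diff_square ip_scaleR_right power_mult_distrib)
  also have "\<dots> = (norm x)\<^sup>2 - (ip x y)\<^sup>2 / (norm y)\<^sup>2"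
    using ny by (simp add: t_def field_simps power2_eq_square)
  finally have "(ip x y)\<^sup>2 \<le> (norm x * norm y)\<^sup>2"
    using ny by (simp add: field_simps power_mult_distrib)
  then show ?thesis by (simp add: abs_le_square_iff power2_le_iff_abs_le)
qed simp

lemma Cauchy_if_nearly_minimizing:
  fixes x :: 'v
  assumes M: "subspace M" and Y: "\<And>n. Y n \<in> M"
    and d: "0 \<le> d" "\<And>y. y \<in> M \<Longrightarrow> d \<le> norm (x - y)"
    and near: "\<And>n. (norm (x - Y n))\<^sup>2 \<le> d\<^sup>2 + inverse (real (Suc n))"
  shows "Cauchy Y"
proof (rule CauchyI)
  have close: "(norm (Y n - Y k))\<^sup>2 \<le> 2 * inverse (real (Suc n)) + 2 * inverse (real (Suc k))"
    for n k
  proof -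
    have "inverse 2 *\<^sub>R (Y n + Y k) \<in> M"
      using M Y by (simp add: subspace_add subspace_scale)
    then have "2 * d \<le> 2 * norm (x - inverse 2 *\<^sub>R (Y n + Y k))"
      using d(2) by simp
    also have "\<dots> = norm ((x - Y n) + (x - Y k))"
    proof -
      have "(x - Y n) + (x - Y k) = 2 *\<^sub>R (x - inverse 2 *\<^sub>R (Y n + Y k))"
        by (simp add: algebra_simps scaleR_2)
      then show ?thesis by simp
    qed
    finally have "(2 * d)\<^sup>2 \<le> (norm ((x - Y n) + (x - Y k)))\<^sup>2"
      using d(1) by (intro power_mono) auto
    then show ?thesis
      using parallelogram_law[of "x - Y n" "x - Y k"] near[of n] near[of k]
      by (simp add: power_mult_distrib norm_minus_commute)
  qed
  fix e :: real
  assume e: "0 < e"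
  obtain N :: nat where N: "4 / e\<^sup>2 < real N"
    using reals_Archimedean2 by blast
  have small: "inverse (real (Suc n)) < e\<^sup>2 / 4" if "N \<le> n" for n
  proof -
    have "4 / e\<^sup>2 < real (Suc n)" using N that by simp
    then show ?thesis using e by (simp add: field_simps)
  qed
  have "norm (Y m - Y n) < e" if "N \<le> m" "N \<le> n" for m n
  proof -
    have "(norm (Y m - Y n))\<^sup>2 < e\<^sup>2"
      using close[of m n] small[OF that(1)] small[OF that(2)] by simp
    then show ?thesis using e by (simp add: power_less_imp_less_base less_le)
  qed
  then show "\<exists>N. \<forall>m\<ge>N. \<forall>n\<ge>N. norm (Y m - Y n) < e" by blast
qed

lemma exists_nearest_point:
  fixes x :: 'v
  assumes M: "subspace M" and cl: "closed M"
  shows "\<exists>p\<in>M. \<forall>y\<in>M. norm (x - p) \<le> norm (x - y)"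
proof -
  define d where "d = Inf ((\<lambda>y. norm (x - y)) ` M)"
  have ne: "(\<lambda>y. norm (x - y)) ` M \<noteq> {}" using subspace_0[OF M] by blast
  have d_le: "d \<le> norm (x - y)" if "y \<in> M" for y
    unfolding d_def using that by (intro cInf_lower bdd_belowI[of _ 0]) auto
  have d0: "0 \<le> d" unfolding d_def using ne by (intro cInf_greatest) auto
  have "\<exists>y\<in>M. (norm (x - y))\<^sup>2 \<le> d\<^sup>2 + inverse (real (Suc n))" for n
  proof -
    have "d < sqrt (d\<^sup>2 + inverse (real (Suc n)))"
      using d0 real_sqrt_less_mono[of "d\<^sup>2" "d\<^sup>2 + inverse (real (Suc n))"] by simp
    then obtain y where y: "y \<in> M" "norm (x - y) < sqrt (d\<^sup>2 + inverse (real (Suc n)))"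
      using cInf_lessD[OF ne] unfolding d_def by blast
    then have "(norm (x - y))\<^sup>2 \<le> d\<^sup>2 + inverse (real (Suc n))"
      using power_strict_mono[OF y(2) norm_ge_zero, of 2] by simp
    with y show ?thesis by blast
  qed
  then obtain Y where Y: "\<And>n. Y n \<in> M" "\<And>n. (norm (x - Y n))\<^sup>2 \<le> d\<^sup>2 + inverse (real (Suc n))"
    by metis
  obtain p where p: "Y \<longlonglongrightarrow> p"
    using Cauchy_if_nearly_minimizing[OF M Y(1) d0 d_le Y(2)] Cauchy_convergent convergent_def
    by blast
  have "p \<in> M" using closed_sequentially[OF cl Y(1) p] .
  have lim: "(\<lambda>n. (norm (x - Y n))\<^sup>2) \<longlonglongrightarrow> (norm (x - p))\<^sup>2"
    by (intro tendsto_intros p)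
  have lim_bound: "(\<lambda>n. d\<^sup>2 + inverse (real (Suc n))) \<longlonglongrightarrow> d\<^sup>2 + 0"
    by (intro tendsto_intros LIMSEQ_inverse_real_of_nat)
  have "(norm (x - p))\<^sup>2 \<le> d\<^sup>2 + 0"
    by (rule LIMSEQ_le[OF lim lim_bound]) (intro exI[of _ 0] allI impI Y(2))
  then have "norm (x - p) \<le> d"
    using d0 power2_le_imp_le by simp
  then have "\<forall>y\<in>M. norm (x - p) \<le> norm (x - y)"
    using d_le order_trans by blast
  with \<open>p \<in> M\<close> show ?thesis by blast
qed

text \<open>The nearest point is the orthogonal projection: otherwise moving it along \<open>y\<close> by the
  small step \<open>t = ip (x - p) y / ((norm y)\<^sup>2 + 1)\<close> would bring it closer to \<open>x\<close>.\<close>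
lemma exists_orthogonal_projection:
  fixes x :: 'v
  assumes M: "subspace M" and cl: "closed M"
  shows "\<exists>p\<in>M. \<forall>y\<in>M. ip (x - p) y = 0"
proof -
  obtain p where p: "p \<in> M" and nearest: "\<And>y. y \<in> M \<Longrightarrow> norm (x - p) \<le> norm (x - y)"
    using exists_nearest_point[OF M cl] by blast
  have "ip (x - p) y = 0" if y: "y \<in> M" for y
  proof (rule ccontr)
    define c where "c = ip (x - p) y"
    define s where "s = (norm y)\<^sup>2"
    define t where "t = c / (s + 1)"
    assume "ip (x - p) y \<noteq> 0"
    then have "c \<noteq> 0" by (simp add: c_def)
    have s0: "0 \<le> s" by (simp add: s_def)
    have "p + t *\<^sub>R y \<in> M" using M p y by (simp add: subspace_add subspace_scale)
    then have "(norm (x - p))\<^sup>2 \<le> (norm ((x - p) - t *\<^sub>R y))\<^sup>2"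
      using nearest by (simp add: algebra_simps power_mono)
    also have "\<dots> = (norm (x - p))\<^sup>2 - 2 * t * c + t\<^sup>2 * s"
      by (simp add: norm_diff_square ip_scaleR_right c_def s_def power_mult_distrib)
    finally have "2 * t * c \<le> t\<^sup>2 * s" by simp
    moreover have c_eq: "c = t * (s + 1)" using s0 by (simp add: t_def)
    ultimately have "t\<^sup>2 * (2 * (s + 1)) \<le> t\<^sup>2 * s"
      by (simp add: power2_eq_square algebra_simps)
    moreover have "t\<^sup>2 > 0" using \<open>c \<noteq> 0\<close> c_eq by simp
    ultimately show False
      using s0 by (simp add: mult_le_cancel_left_pos)
  qed
  with p show ?thesis by blast
qed

text \<open>The representer is a multiple of the component \<open>e\<close> of any vector outside the kernel
  that is orthogonal to the kernel.\<close>
lemma riesz_representation: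
  assumes "bounded_linear \<phi>"
  shows "\<exists>z. \<forall>x. \<phi> x = ip x z"
proof (cases "\<forall>x. \<phi> x = 0")
  case True
  then show ?thesis by (intro exI[of _ 0]) simp
next
  case False
  interpret \<phi>: bounded_linear \<phi> by fact
  obtain x0 where x0: "\<phi> x0 \<noteq> 0" using False by blast
  define N where "N = {x. \<phi> x = 0}"
  have "closed N"
    unfolding N_def by (intro closed_Collect_eq continuous_intros \<phi>.continuous_on)
  moreover have "subspace N"
    unfolding N_def subspace_def by (simp add: \<phi>.add \<phi>.scaleR)
  ultimately obtain p where p: "p \<in> N" and orth: "\<And>y. y \<in> N \<Longrightarrow> ip (x0 - p) y = 0"
    using exists_orthogonal_projection by blast
  define e where "e = x0 - p"
  have \<phi>e: "\<phi> e = \<phi> x0" using p by (simp add: e_def N_def \<phi>.diff)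
  have "ip x e = \<phi> x / \<phi> e * (norm e)\<^sup>2" for x
  proof -
    have "x - (\<phi> x / \<phi> e) *\<^sub>R e \<in> N"
      using \<phi>e x0 by (simp add: N_def \<phi>.diff \<phi>.scaleR)
    then have "ip e (x - (\<phi> x / \<phi> e) *\<^sub>R e) = 0"
      using orth by (simp add: e_def)
    then show ?thesis
      by (simp add: ip_diff_right ip_scaleR_right ip_commute[of e] ip_self)
  qed
  moreover have "e \<noteq> 0" using \<phi>e x0 by auto
  ultimately have "\<phi> x = ip x ((\<phi> e / (norm e)\<^sup>2) *\<^sub>R e)" for x
    using \<phi>e x0 by (simp add: ip_scaleR_right)
  then show ?thesis by blast
qed


lemma image_eq_UNIV_if_bounded_below:
  fixes T :: "'v \<Rightarrow> 'v"
  assumes S: "subspace S"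
    and add: "\<And>x y. x \<in> S \<Longrightarrow> y \<in> S \<Longrightarrow> T (x + y) = T x + T y"
    and scale: "\<And>r x. x \<in> S \<Longrightarrow> T (r *\<^sub>R x) = r *\<^sub>R T x"
    and below: "\<And>x. x \<in> S \<Longrightarrow> norm x \<le> C * norm (T x)"
    and closed_graph: "\<And>X x y. (\<forall>n. X n \<in> S) \<Longrightarrow> X \<longlonglongrightarrow> x \<Longrightarrow> (\<lambda>n. T (X n)) \<longlonglongrightarrow> y
      \<Longrightarrow> x \<in> S \<and> T x = y"
    and orth: "\<And>h. \<forall>x\<in>S. ip (T x) h = 0 \<Longrightarrow> h = 0"
  shows "T ` S = UNIV"
proof -
  have diff: "T (x - y) = T x - T y" if "x \<in> S" "y \<in> S" for x y
    using add[OF that(1) subspace_scale[OF S that(2), of "-1"]] scale[OF that(2), of "-1"] by simp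
  have "subspace (T ` S)" by (rule subspace_image_if_linear_on[OF S add scale])
  moreover have "closed (T ` S)"
    by (rule closed_image_if_bounded_below[OF S diff below closed_graph])
  ultimately have "y \<in> T ` S" for y
  proof -
    obtain q where q: "q \<in> T ` S" and "\<forall>z\<in>T ` S. ip (y - q) z = 0"
      using exists_orthogonal_projection[OF \<open>subspace (T ` S)\<close> \<open>closed (T ` S)\<close>] by blast
    then have "\<forall>x\<in>S. ip (T x) (y - q) = 0" by (simp add: ip_commute)
    then have "y - q = 0" by (rule orth)
    with q show ?thesis by simp
  qed
  then show ?thesis by blast
qed

end

section \<open>Complex Hilbert spaces as real Hilbert spaces\<close>

interpretation Re_cinner: real_hilbert_space "\<lambda>x y::'a::chilbert. Re (cinner x y)"
  by unfold_locales
    (simp_all add: Re_cinner_commute cinner_add_left cinner_scaleR_left Re_cinner_self)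

definition Re_cinner_prod :: "'a::chilbert \<times> 'b::chilbert \<Rightarrow> 'a \<times> 'b \<Rightarrow> real" where
  "Re_cinner_prod p q = Re (cinner (fst p) (fst q)) + Re (cinner (snd p) (snd q))"

interpretation Re_cinner_prod: real_hilbert_space "Re_cinner_prod :: 'a::chilbert \<times> 'b::chilbert \<Rightarrow> _"
  by unfold_locales
    (simp_all add: Re_cinner_prod_def Re_cinner_commute cinner_add_left cinner_scaleR_left
      Re_cinner_self norm_prod_def algebra_simps)

lemma abs_Re_cinner_le: "\<bar>Re (cinner x y)\<bar> \<le> norm x * norm (y::'a::chilbert)"
  by (rule Re_cinner.abs_ip_le)

lemma norm_scaleC: "norm (c *\<^sub>C x) = cmod c * norm (x::'a::chilbert)"
proof -
  have "cinner (c *\<^sub>C x) (c *\<^sub>C x) = (c * cnj c) * cinner x x"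
    by (simp add: cinner_scaleC_left cinner_scaleC_right)
  also have "c * cnj c = complex_of_real ((cmod c)\<^sup>2)"
    by (rule complex_norm_square[symmetric])
  finally have "cinner (c *\<^sub>C x) (c *\<^sub>C x) = complex_of_real ((cmod c)\<^sup>2) * cinner x x" .
  then have "Re (cinner (c *\<^sub>C x) (c *\<^sub>C x)) = (cmod c)\<^sup>2 * Re (cinner x x)"
    by simp
  then have "(norm (c *\<^sub>C x))\<^sup>2 = (cmod c * norm x)\<^sup>2"
    by (simp add: Re_cinner_self power_mult_distrib)
  then show ?thesis by (simp add: power2_eq_iff_nonneg)
qed

text \<open>Rotating \<open>x\<close> by the phase of \<open>cinner x y\<close> reduces the complex Cauchy--Schwarz inequality
  to the real one.\<close>
lemma cmod_cinner_le: "cmod (cinner x y) \<le> norm x * norm (y::'a::chilbert)"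
proof (cases "cinner x y = 0")
  case False
  define c where "c = cinner x y"
  define k where "k = cnj c / complex_of_real (cmod c)"
  have "cmod k = 1" using False by (simp add: k_def c_def norm_divide)
  have "cnj c * c = complex_of_real ((cmod c)\<^sup>2)"
    by (simp add: complex_norm_square[symmetric] mult.commute)
  then have "k * c = complex_of_real (cmod c)"
    using False by (simp add: k_def c_def power2_eq_square)
  then have "Re (cinner (k *\<^sub>C x) y) = cmod c"
    by (simp add: cinner_scaleC_left c_def)
  with abs_Re_cinner_le[of "k *\<^sub>C x" y] \<open>cmod k = 1\<close> show ?thesis
    by (simp add: norm_scaleC c_def)
qed simp

lemma bounded_linear_cinner_left: "bounded_linear (\<lambda>x. cinner (x::'a::chilbert) w)"
  by (rule bounded_linear_intro[of _ "norm w"])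
    (simp_all add: cinner_add_left cinner_scaleR_left scaleR_conv_of_real cmod_cinner_le)

lemma bounded_linear_cinner_right: "bounded_linear (\<lambda>x. cinner w (x::'a::chilbert))"
  by (rule bounded_linear_intro[of _ "norm w"])
    (simp_all add: cinner_add_right scaleR_scaleC cinner_scaleC_right scaleR_conv_of_real
      cmod_cinner_le[of w, THEN order_trans] mult.commute)

section \<open>Linear operators as graphs\<close>

context
  fixes A :: "('a::chilbert \<times> 'b::chilbert) set"
  assumes A: "lin_op A"
begin

lemma lin_op_zero: "(0, 0) \<in> A"
  using A by (simp add: lin_op_def)

lemma lin_op_add: "(x, y) \<in> A \<Longrightarrow> (u, v) \<in> A \<Longrightarrow> (x + u, y + v) \<in> A"
  using A by (simp add: lin_op_def)

lemma lin_op_scaleC: "(x, y) \<in> A \<Longrightarrow> (c *\<^sub>C x, c *\<^sub>C y) \<in> A"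
  using A by (simp add: lin_op_def)

lemma lin_op_diff: "(x, y) \<in> A \<Longrightarrow> (u, v) \<in> A \<Longrightarrow> (x - u, y - v) \<in> A"
  using lin_op_add[of x y "- u" "- v"] lin_op_scaleC[of u v "-1"] by (simp add: scaleC_minus_one)

lemma op_app_eq: "(x, y) \<in> A \<Longrightarrow> op_app A x = y"
proof -
  have "y = y'" if "(x, y) \<in> A" "(x, y') \<in> A" for y y'
    using lin_op_diff[OF that] A unfolding lin_op_def by (metis eq_iff_diff_eq_0 diff_self)
  then show "(x, y) \<in> A \<Longrightarrow> op_app A x = y"
    unfolding op_app_def by blast
qed

lemma op_app_in_graph: "x \<in> Domain A \<Longrightarrow> (x, op_app A x) \<in> A"
  using op_app_eq by blast

lemma op_app_zero: "op_app A 0 = 0"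
  using op_app_eq[OF lin_op_zero] .

lemma lin_op_Domain_zero: "0 \<in> Domain A"
  using lin_op_zero by blast

lemma lin_op_Domain_add: "x \<in> Domain A \<Longrightarrow> u \<in> Domain A \<Longrightarrow> x + u \<in> Domain A"
  using lin_op_add by blast

lemma lin_op_Domain_scaleC: "x \<in> Domain A \<Longrightarrow> c *\<^sub>C x \<in> Domain A"
  using lin_op_scaleC by blast

lemma lin_op_Domain_diff: "x \<in> Domain A \<Longrightarrow> u \<in> Domain A \<Longrightarrow> x - u \<in> Domain A"
  using lin_op_diff by blast

lemma op_app_add: "x \<in> Domain A \<Longrightarrow> u \<in> Domain A \<Longrightarrow> op_app A (x + u) = op_app A x + op_app A u"
  by (intro op_app_eq lin_op_add op_app_in_graph)

lemma op_app_diff: "x \<in> Domain A \<Longrightarrow> u \<in> Domain A \<Longrightarrow> op_app A (x - u) = op_app A x - op_app A u"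
  by (intro op_app_eq lin_op_diff op_app_in_graph)

lemma op_app_scaleC: "x \<in> Domain A \<Longrightarrow> op_app A (c *\<^sub>C x) = c *\<^sub>C op_app A x"
  by (intro op_app_eq lin_op_scaleC op_app_in_graph)

lemma lin_op_Domain_subspace: "subspace (Domain A)"
  unfolding subspace_def
  using lin_op_Domain_zero lin_op_Domain_add lin_op_Domain_scaleC[of _ "complex_of_real _"]
  by (auto simp: scaleR_scaleC)

lemma lin_op_subspace: "subspace A"
  unfolding subspace_def
proof (intro conjI ballI allI)
  show "0 \<in> A" using lin_op_zero by (simp add: zero_prod_def)
  show "x + y \<in> A" if "x \<in> A" "y \<in> A" for x y
    using lin_op_add[of "fst x" "snd x" "fst y" "snd y"] that by (simp add: plus_prod_def)
  show "r *\<^sub>R x \<in> A" if "x \<in> A" for r x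
    using lin_op_scaleC[of "fst x" "snd x" "complex_of_real r"] that
    by (simp add: scaleR_prod_def scaleR_scaleC)
qed

end

lemma neg_op_iff: "(x, y) \<in> neg_op A \<longleftrightarrow> (x, - y) \<in> A"
  unfolding neg_op_def by force

lemma neg_op_neg_op [simp]: "neg_op (neg_op A) = A"
  by (auto simp: neg_op_iff)

lemma neg_op_mono: "A \<subseteq> B \<Longrightarrow> neg_op A \<subseteq> neg_op B"
  by (auto simp: neg_op_iff)

lemma Domain_neg_op [simp]: "Domain (neg_op A) = Domain A"
  by (auto simp: neg_op_iff) (metis neg_op_iff minus_minus Domain.intros)

lemma lin_op_neg_op:
  assumes "lin_op A"
  shows "lin_op (neg_op A)"
  unfolding lin_op_def neg_op_iff
proof (intro conjI allI impI)
  show "(0, - 0) \<in> A" using lin_op_zero[OF assms] by simp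
  show "(x + u, - (y + v)) \<in> A" if "(x, - y) \<in> A" "(u, - v) \<in> A" for x y u v
    using lin_op_add[OF assms that] by simp
  show "(c *\<^sub>C x, - (c *\<^sub>C y)) \<in> A" if "(x, - y) \<in> A" for c x y
    using lin_op_scaleC[OF assms that, of c] by (simp add: scaleC_minus_right)
  show "y = 0" if "(0, - y) \<in> A" for y
    using op_app_eq[OF assms that] op_app_zero[OF assms] by simp
qed

lemma op_app_neg_op: "lin_op A \<Longrightarrow> x \<in> Domain A \<Longrightarrow> op_app (neg_op A) x = - op_app A x"
  by (intro op_app_eq lin_op_neg_op) (auto simp: neg_op_iff intro: op_app_in_graph)

lemma closed_neg_op:
  fixes A :: "('a::real_normed_vector \<times> 'b::real_normed_vector) set"
  assumes "closed A"
  shows "closed (neg_op A)"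
proof -
  have "neg_op A = (\<lambda>p. (fst p, - snd p)) -` A" by (auto simp: neg_op_iff)
  moreover have "closed ((\<lambda>p. (fst p, - snd p)) -` A)"
    by (intro continuous_closed_vimage assms continuous_intros)
  ultimately show ?thesis by simp
qed

section \<open>Adjoints\<close>

lemma adj_iff: "(y, z) \<in> adj A \<longleftrightarrow> (\<forall>x w. (x, w) \<in> A \<longrightarrow> cinner w y = cinner x z)"
  unfolding adj_def by simp

lemma lin_op_adj:
  assumes "densely_defined A"
  shows "lin_op (adj A)"
proof -
  have "z = 0" if "(0, z) \<in> adj A" for z
  proof -
    have "Domain A \<subseteq> {x. cinner x z = 0}" using that by (auto simp: adj_iff)
    moreover have "closed {x. cinner x z = 0}"
      by (intro closed_Collect_eq continuous_intros linear_continuous_on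
          bounded_linear_cinner_left)
    ultimately have "closure (Domain A) \<subseteq> {x. cinner x z = 0}" by (rule closure_minimal)
    then show ?thesis using assms cinner_self_eq_0_iff[of z] by (auto simp: densely_defined_def)
  qed
  then show ?thesis
    unfolding lin_op_def by (simp add: adj_iff cinner_add_right cinner_scaleC_right)
qed

lemma closed_adj: "closed (adj (A :: ('a::chilbert \<times> 'b::chilbert) set))"
proof -
  have "adj A = (\<Inter>p\<in>A. {q. cinner (snd p) (fst q) = cinner (fst p) (snd q)})"
    unfolding adj_def by force
  moreover have "closed {q. cinner (snd p) (fst q) = cinner (fst p) (snd q)}" for p :: "'a \<times> 'b"
    by (intro closed_Collect_eq linear_continuous_on bounded_linear_compose[OF bounded_linear_cinner_right]
        bounded_linear_fst bounded_linear_snd)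
  ultimately show ?thesis by (simp add: closed_INT)
qed

lemma adj_neg_op: "adj (neg_op A) = neg_op (adj A)"
proof -
  have "(\<forall>x w. (x, - w) \<in> A \<longrightarrow> cinner w y = cinner x z)
      \<longleftrightarrow> (\<forall>x w. (x, w) \<in> A \<longrightarrow> cinner w y = cinner x (- z))" for y z
  proof (intro iffI allI impI)
    fix x w
    assume "\<forall>x w. (x, - w) \<in> A \<longrightarrow> cinner w y = cinner x z" and "(x, w) \<in> A"
    then have "cinner (- w) y = cinner x z" by simp
    then show "cinner w y = cinner x (- z)"
      by (metis cinner_minus_left cinner_minus_right minus_minus)
  next
    fix x w
    assume "\<forall>x w. (x, w) \<in> A \<longrightarrow> cinner w y = cinner x (- z)" and "(x, - w) \<in> A"
    then have "cinner (- w) y = cinner x (- z)" by blast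
    then show "cinner w y = cinner x z" by (simp add: cinner_minus_left cinner_minus_right)
  qed
  then show ?thesis
    by (auto simp: adj_iff neg_op_iff)
qed

lemma adj_antimono: "A \<subseteq> B \<Longrightarrow> adj B \<subseteq> adj A"
  unfolding adj_def by blast

lemma subset_adj_adj: "A \<subseteq> adj (adj A)"
  by (auto simp: adj_iff) (metis cinner_commute)

lemma in_adj_if_Re_eq:
  assumes "lin_op A"
    and "\<And>x w. (x, w) \<in> A \<Longrightarrow> Re (cinner w y) = Re (cinner x z)"
  shows "(y, z) \<in> adj A"
  unfolding adj_iff using assms lin_op_scaleC[OF assms(1)] by (blast intro: cinner_eq_if_Re_eq)

text \<open>A vector of \<open>adj (adj A)\<close> differs from its projection onto the closed graph \<open>A\<close> by
  \<open>(e1, e2)\<close> with \<open>(e2, - e1) \<in> adj A\<close>, which forces \<open>- (norm e1)\<^sup>2 = (norm e2)\<^sup>2\<close>.\<close>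
lemma adj_adj_subset:
  assumes "lin_op A" and "closed A"
  shows "adj (adj A) \<subseteq> A"
proof (clarify)
  fix f y assume fy: "(f, y) \<in> adj (adj A)"
  obtain u v where uv: "(u, v) \<in> A" and orth: "\<And>r. r \<in> A \<Longrightarrow> Re_cinner_prod ((f, y) - (u, v)) r = 0"
    using Re_cinner_prod.exists_orthogonal_projection[OF lin_op_subspace[OF assms(1)] assms(2)]
    by fast
  define e1 e2 where "e1 = f - u" and "e2 = y - v"
  have "(e2, - e1) \<in> adj A"
  proof (rule in_adj_if_Re_eq[OF assms(1)])
    fix x w assume "(x, w) \<in> A"
    from orth[OF this] show "Re (cinner w e2) = Re (cinner x (- e1))"
      by (simp add: Re_cinner_prod_def e1_def e2_def cinner_minus_right cinner_diff_right
          Re_cinner_commute)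
  qed
  then have "cinner (- e1) f = cinner e2 y" and "cinner (- e1) u = cinner e2 v"
    using fy uv subset_adj_adj[of A] by (auto simp: adj_iff)
  then have "cinner (- e1) e1 = cinner e2 e2"
    by (simp add: e1_def e2_def cinner_diff_right)
  then have "- (norm e1)\<^sup>2 = (norm e2)\<^sup>2"
    by (metis Re_cinner_self cinner_minus_left uminus_complex.simps(1))
  then have "e1 = 0 \<and> e2 = 0"
    by (smt (verit) norm_eq_zero zero_le_power2 power2_eq_square mult_eq_0_iff)
  then show "(f, y) \<in> A" using uv by (simp add: e1_def e2_def)
qed

lemma adj_adj: "closed_op A \<Longrightarrow> adj (adj A) = A"
  using adj_adj_subset subset_adj_adj by (auto simp: closed_op_def)

section \<open>Bounded and coercive operators\<close>

context
  fixes f :: "'a::chilbert \<Rightarrow> 'b::chilbert"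
  assumes f: "bounded_clop f"
begin

lemma bounded_clop_add: "f (x + y) = f x + f y"
  using f by (simp add: bounded_clop_def)

lemma bounded_clop_scaleC: "f (c *\<^sub>C x) = c *\<^sub>C f x"
  using f by (simp add: bounded_clop_def)

lemma bounded_clop_pos_bound: "\<exists>K>0. \<forall>x. norm (f x) \<le> K * norm x"
proof -
  obtain K where K: "\<And>x. norm (f x) \<le> K * norm x"
    using f by (auto simp: bounded_clop_def)
  have "norm (f x) \<le> (\<bar>K\<bar> + 1) * norm x" for x
    using K[of x] mult_right_mono[of K "\<bar>K\<bar> + 1" "norm x"] by force
  then show ?thesis by (intro exI[of _ "\<bar>K\<bar> + 1"]) auto
qed

lemma bounded_clop_bounded_linear: "bounded_linear f"
proof -
  obtain K where K: "\<And>x. norm (f x) \<le> K * norm x"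
    using f by (auto simp: bounded_clop_def)
  show ?thesis
    by (rule bounded_linear_intro[of _ K])
      (simp_all add: bounded_clop_add scaleR_scaleC bounded_clop_scaleC K mult.commute)
qed

interpretation bounded_linear f
  by (rule bounded_clop_bounded_linear)

lemmas bounded_clop_diff = diff and bounded_clop_zero = zero and bounded_clop_tendsto = tendsto

lemma bounded_clop_Re_adjoint: "\<exists>z. \<forall>x. Re (cinner (f x) y) = Re (cinner x z)"
proof (rule Re_cinner.riesz_representation)
  show "bounded_linear (\<lambda>x. Re (cinner (f x) y))"
    using bounded_linear_compose[OF bounded_linear_Re
        bounded_linear_compose[OF bounded_linear_cinner_left bounded_linear_axioms]] by simp
qed

end

lemma coercive_bounded_below:
  assumes "coercive a"
  shows "\<exists>\<mu>>0. \<forall>x. \<mu> * norm x \<le> norm (a x)"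
proof -
  obtain \<mu> where \<mu>: "\<mu> > 0" "\<And>x. \<mu> * (norm x)\<^sup>2 \<le> Re (cinner (a x) x)"
    using assms by (auto simp: coercive_def)
  have "\<mu> * norm x \<le> norm (a x)" for x
  proof (cases "x = 0")
    case False
    have "\<mu> * norm x * norm x \<le> norm (a x) * norm x"
      using \<mu>(2)[of x] abs_Re_cinner_le[of "a x" x] by (simp add: power2_eq_square)
    then show ?thesis using False by simp
  qed simp
  with \<mu> show ?thesis by blast
qed

context
  fixes a :: "'a::chilbert \<Rightarrow> 'a"
  assumes a: "bounded_clop a" "coercive a"
begin

lemma coercive_inj: "inj a"
proof (rule injI)
  fix x y
  assume "a x = a y"
  then have "a (x - y) = 0" by (simp add: bounded_clop_diff[OF a(1)])
  moreover obtain \<mu> where "\<mu> > 0" "\<And>x. \<mu> * norm x \<le> norm (a x)"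
    using coercive_bounded_below[OF a(2)] by blast
  ultimately have "\<mu> * norm (x - y) \<le> 0" by (metis norm_zero)
  with \<open>\<mu> > 0\<close> show "x = y" by (simp add: mult_le_0_iff)
qed

lemma coercive_surj: "surj a"
proof -
  obtain \<mu> where \<mu>: "\<mu> > 0" "\<And>x. \<mu> * norm x \<le> norm (a x)"
    using coercive_bounded_below[OF a(2)] by blast
  obtain \<nu> where \<nu>: "\<nu> > 0" "\<And>x. \<nu> * (norm x)\<^sup>2 \<le> Re (cinner (a x) x)"
    using a(2) by (auto simp: coercive_def)
  show ?thesis
  proof (rule Re_cinner.image_eq_UNIV_if_bounded_below[of UNIV a "1 / \<mu>"])
    show "norm x \<le> 1 / \<mu> * norm (a x)" for x
      using \<mu> by (simp add: field_simps)
    show "x \<in> UNIV \<and> a x = y" if "X \<longlonglongrightarrow> x" "(\<lambda>n. a (X n)) \<longlonglongrightarrow> y" for X x y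
      using LIMSEQ_unique[OF bounded_clop_tendsto[OF a(1) that(1)] that(2)] by simp
    show "h = 0" if "\<forall>x\<in>UNIV. Re (cinner (a x) h) = 0" for h
      using \<nu> that by (metis mult_le_0_iff norm_le_zero_iff power2_eq_square UNIV_I
          mult_pos_pos not_le)
  qed (simp_all add: bounded_clop_add[OF a(1)] scaleR_scaleC bounded_clop_scaleC[OF a(1)])
qed

lemma coercive_apply_inv: "a (inv a y) = y"
  by (meson coercive_surj surj_f_inv_f)

lemma coercive_inv_apply: "inv a (a x) = x"
  by (meson coercive_inj inv_f_f)

lemma bounded_clop_inv: "bounded_clop (inv a)"
  unfolding bounded_clop_def
proof (intro conjI allI)
  show "inv a (x + y) = inv a x + inv a y" for x y
    by (metis bounded_clop_add[OF a(1)] coercive_apply_inv coercive_inv_apply)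
  show "inv a (c *\<^sub>C x) = c *\<^sub>C inv a x" for c x
    by (metis bounded_clop_scaleC[OF a(1)] coercive_apply_inv coercive_inv_apply)
  obtain \<mu> where \<mu>: "\<mu> > 0" "\<And>x. \<mu> * norm x \<le> norm (a x)"
    using coercive_bounded_below[OF a(2)] by blast
  have "norm (inv a x) \<le> 1 / \<mu> * norm x" for x
    using \<mu>(2)[of "inv a x"] \<mu>(1) by (simp add: coercive_apply_inv field_simps)
  then show "\<exists>K. \<forall>x. norm (inv a x) \<le> K * norm x" by blast
qed

text \<open>With \<open>s = inv a q\<close>: \<open>Re (cinner (inv a q) q) = Re (cinner (a s) s) \<ge> \<nu> (norm s)\<^sup>2 \<ge>
  (\<nu> / K\<^sup>2) (norm q)\<^sup>2\<close>, where \<open>K\<close> bounds \<open>a\<close>.\<close>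
lemma coercive_inv: "coercive (inv a)"
proof -
  obtain \<nu> where \<nu>: "\<nu> > 0" "\<And>x. \<nu> * (norm x)\<^sup>2 \<le> Re (cinner (a x) x)"
    using a(2) by (auto simp: coercive_def)
  obtain K where K: "K > 0" "\<And>x. norm (a x) \<le> K * norm x"
    using bounded_clop_pos_bound[OF a(1)] by blast
  have "\<nu> / K\<^sup>2 * (norm q)\<^sup>2 \<le> Re (cinner (inv a q) q)" for q
  proof -
    define s where "s = inv a q"
    have q: "q = a s" by (simp add: s_def coercive_apply_inv)
    have "(norm q)\<^sup>2 \<le> (K * norm s)\<^sup>2"
      using K(2)[of s] by (simp add: q power_mono)
    then have "\<nu> / K\<^sup>2 * (norm q)\<^sup>2 \<le> \<nu> * (norm s)\<^sup>2"
      using K(1) \<nu>(1) by (simp add: field_simps power_mult_distrib)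
    also have "\<dots> \<le> Re (cinner (a s) s)" by (rule \<nu>(2))
    finally show ?thesis by (simp add: s_def coercive_apply_inv Re_cinner_commute)
  qed
  moreover have "\<nu> / K\<^sup>2 > 0" using \<nu>(1) K(1) by simp
  ultimately show ?thesis unfolding coercive_def by blast
qed

end

section \<open>Block operator matrices\<close>

lemma the_inv_into_onto_UNIV:
  assumes "bij_betw f A UNIV"
  shows "the_inv_into A f y \<in> A" and "f (the_inv_into A f y) = y"
  using assms the_inv_into_into[of f A y] f_the_inv_into_f_bij_betw[OF assms]
  by (auto simp: bij_betw_def)

definition block_op :: "('b::chilbert \<times> 'a::chilbert) set \<Rightarrow> ('b \<Rightarrow> 'b) \<Rightarrow> ('a \<Rightarrow> 'a)
    \<Rightarrow> 'a \<times> 'b \<Rightarrow> 'a \<times> 'b" where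
  "block_op T b m p = (m (fst p) - op_app T (snd p), op_app (adj T) (fst p) + b (snd p))"

context
  fixes T :: "('b::chilbert \<times> 'a::chilbert) set" and b :: "'b \<Rightarrow> 'b" and m :: "'a \<Rightarrow> 'a"
  assumes T: "lin_op T" "closed T" and adj_T: "lin_op (adj T)"
    and b: "bounded_clop b" "coercive b"
    and m: "bounded_clop m" "coercive m"
begin

abbreviation (input) "dom_block \<equiv> Domain (adj T) \<times> Domain T"

lemma block_op_Domain_subspace: "subspace dom_block"
  by (intro subspace_Times lin_op_Domain_subspace T(1) adj_T)

lemma block_op_add: "p \<in> dom_block \<Longrightarrow> p' \<in> dom_block \<Longrightarrow>
    block_op T b m (p + p') = block_op T b m p + block_op T b m p'"
  by (auto simp: block_op_def mem_Times_iff op_app_add[OF T(1)] op_app_add[OF adj_T]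
      bounded_clop_add[OF m(1)] bounded_clop_add[OF b(1)])

lemma block_op_scaleR: "p \<in> dom_block \<Longrightarrow> block_op T b m (r *\<^sub>R p) = r *\<^sub>R block_op T b m p"
  by (auto simp: block_op_def mem_Times_iff scaleR_scaleC op_app_scaleC[OF T(1)] op_app_scaleC[OF adj_T]
      bounded_clop_scaleC[OF m(1)] bounded_clop_scaleC[OF b(1)] scaleC_diff_right scaleC_add_right)

lemma block_op_diff: "p \<in> dom_block \<Longrightarrow> p' \<in> dom_block \<Longrightarrow>
    block_op T b m (p - p') = block_op T b m p - block_op T b m p'"
  using block_op_add[of p "(-1) *\<^sub>R p'"] block_op_scaleR[of p' "-1"]
    subspace_scale[OF block_op_Domain_subspace, of p' "-1"]
  by simp

text \<open>The off-diagonal entries are skew-adjoint to each other, so they drop out of the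
  real part of the inner product.\<close>
lemma Re_cinner_prod_block_op:
  assumes "(w, q) \<in> dom_block"
  shows "Re_cinner_prod (block_op T b m (w, q)) (w, q) = Re (cinner (m w) w) + Re (cinner (b q) q)"
proof -
  have "cinner (op_app T q) w = cinner q (op_app (adj T) w)"
    using assms op_app_in_graph[OF adj_T] op_app_in_graph[OF T(1)] by (auto simp: adj_iff)
  then have "Re (cinner (op_app (adj T) w) q) = Re (cinner (op_app T q) w)"
    by (simp add: Re_cinner_commute[of "op_app (adj T) w"])
  then show ?thesis
    by (simp add: block_op_def Re_cinner_prod_def cinner_diff_left cinner_add_left)
qed

lemma block_op_coercive: "\<exists>c>0. \<forall>p\<in>dom_block. c * (norm p)\<^sup>2 \<le> Re_cinner_prod (block_op T b m p) p"
proof -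
  obtain \<mu> where \<mu>: "\<mu> > 0" "\<And>x. \<mu> * (norm x)\<^sup>2 \<le> Re (cinner (m x) x)"
    using m(2) by (auto simp: coercive_def)
  obtain \<nu> where \<nu>: "\<nu> > 0" "\<And>x. \<nu> * (norm x)\<^sup>2 \<le> Re (cinner (b x) x)"
    using b(2) by (auto simp: coercive_def)
  have "min \<mu> \<nu> * (norm (w, q))\<^sup>2 \<le> Re_cinner_prod (block_op T b m (w, q)) (w, q)"
    if "(w, q) \<in> dom_block" for w q
  proof -
    have "min \<mu> \<nu> * (norm (w, q))\<^sup>2 = min \<mu> \<nu> * (norm w)\<^sup>2 + min \<mu> \<nu> * (norm q)\<^sup>2"
      by (simp add: norm_prod_def algebra_simps)
    also have "\<dots> \<le> \<mu> * (norm w)\<^sup>2 + \<nu> * (norm q)\<^sup>2"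
      by (intro add_mono mult_right_mono) auto
    also have "\<dots> \<le> Re_cinner_prod (block_op T b m (w, q)) (w, q)"
      using Re_cinner_prod_block_op[OF that] \<mu>(2)[of w] \<nu>(2)[of q] by linarith
    finally show ?thesis .
  qed
  then show ?thesis using \<mu>(1) \<nu>(1) by (intro exI[of _ "min \<mu> \<nu>"]) auto
qed

lemma block_op_bounded_below: "\<exists>C>0. \<forall>p\<in>dom_block. norm p \<le> C * norm (block_op T b m p)"
proof -
  obtain c where c: "c > 0" "\<And>p. p \<in> dom_block \<Longrightarrow> c * (norm p)\<^sup>2 \<le> Re_cinner_prod (block_op T b m p) p"
    using block_op_coercive by blast
  have "norm p \<le> 1 / c * norm (block_op T b m p)" if "p \<in> dom_block" for p
  proof (cases "p = 0")
    case False
    have "c * norm p * norm p \<le> norm (block_op T b m p) * norm p"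
      using c(2)[OF that] Re_cinner_prod.abs_ip_le[of "block_op T b m p" p]
      by (simp add: power2_eq_square)
    then show ?thesis using False c(1) by (simp add: field_simps)
  qed (use c(1) in simp)
  then show ?thesis using c(1) by (intro exI[of _ "1 / c"]) auto
qed

lemma block_op_closed_graph:
  assumes P: "\<forall>n. P n \<in> dom_block" and lim: "P \<longlonglongrightarrow> (w, q)" "(\<lambda>n. block_op T b m (P n)) \<longlonglongrightarrow> (y1, y2)"
  shows "(w, q) \<in> dom_block \<and> block_op T b m (w, q) = (y1, y2)"
proof -
  have w: "(\<lambda>n. fst (P n)) \<longlonglongrightarrow> w" and q: "(\<lambda>n. snd (P n)) \<longlonglongrightarrow> q"
    using tendsto_fst[OF lim(1)] tendsto_snd[OF lim(1)] by simp_all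
  have "(\<lambda>n. m (fst (P n)) - (m (fst (P n)) - op_app T (snd (P n)))) \<longlonglongrightarrow> m w - y1"
    using bounded_clop_tendsto[OF m(1) w] tendsto_fst[OF lim(2)]
    by (intro tendsto_diff) (simp_all add: block_op_def)
  then have lim_T: "(\<lambda>n. (snd (P n), op_app T (snd (P n)))) \<longlonglongrightarrow> (q, m w - y1)"
    by (intro tendsto_Pair q) simp
  have "(snd (P n), op_app T (snd (P n))) \<in> T" for n
    using P op_app_in_graph[OF T(1)] by (auto simp: mem_Times_iff)
  from closed_sequentially[OF T(2) this lim_T] have inT: "(q, m w - y1) \<in> T" .
  have "(\<lambda>n. (op_app (adj T) (fst (P n)) + b (snd (P n))) - b (snd (P n))) \<longlonglongrightarrow> y2 - b q"
    using bounded_clop_tendsto[OF b(1) q] tendsto_snd[OF lim(2)]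
    by (intro tendsto_diff) (simp_all add: block_op_def)
  then have lim_adj: "(\<lambda>n. (fst (P n), op_app (adj T) (fst (P n)))) \<longlonglongrightarrow> (w, y2 - b q)"
    by (intro tendsto_Pair w) simp
  have "(fst (P n), op_app (adj T) (fst (P n))) \<in> adj T" for n
    using P op_app_in_graph[OF adj_T] by (auto simp: mem_Times_iff)
  from closed_sequentially[OF closed_adj this lim_adj] have inA: "(w, y2 - b q) \<in> adj T" .
  show ?thesis
    using inT inA op_app_eq[OF T(1) inT] op_app_eq[OF adj_T inA] by (auto simp: block_op_def)
qed

text \<open>Testing \<open>h = (f, g)\<close> against \<open>(w, 0)\<close> and \<open>(0, q)\<close> shows
  \<open>(g, - m\<^sup>* f) \<in> adj (adj T) = T\<close> and \<open>(f, b\<^sup>* g) \<in> adj T\<close>, where \<open>m\<^sup>*\<close>, \<open>b\<^sup>*\<close>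
  are the real adjoints; pairing these two graph elements gives
  \<open>Re (cinner (m f) f) + Re (cinner (b g) g) = 0\<close>.\<close>
lemma block_op_orthogonal_range:
  assumes h: "\<forall>p\<in>dom_block. Re_cinner_prod (block_op T b m p) h = 0"
  shows "h = 0"
proof -
  obtain f g where fg: "h = (f, g)" by fastforce
  obtain z1 where z1: "\<And>w. Re (cinner (m w) f) = Re (cinner w z1)"
    using bounded_clop_Re_adjoint[OF m(1)] by blast
  obtain z2 where z2: "\<And>r. Re (cinner (b r) g) = Re (cinner r z2)"
    using bounded_clop_Re_adjoint[OF b(1)] by blast
  have "(g, - z1) \<in> adj (adj T)"
  proof (rule in_adj_if_Re_eq[OF adj_T])
    fix w s
    assume ws: "(w, s) \<in> adj T"
    then have "(w, 0) \<in> dom_block" using lin_op_Domain_zero[OF T(1)] by auto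
    with h ws show "Re (cinner s g) = Re (cinner w (- z1))"
      using z1[of w] op_app_eq[OF adj_T ws]
      by (force simp: block_op_def op_app_zero[OF T(1)] bounded_clop_zero[OF b(1)]
          Re_cinner_prod_def fg cinner_minus_right)
  qed
  then have g: "(g, - z1) \<in> T" using adj_adj_subset[OF T] by blast
  have f: "(f, z2) \<in> adj T"
  proof (rule in_adj_if_Re_eq[OF T(1)])
    fix q v
    assume qv: "(q, v) \<in> T"
    then have "(0, q) \<in> dom_block" using lin_op_Domain_zero[OF adj_T] by auto
    with h qv show "Re (cinner v f) = Re (cinner q z2)"
      using z2[of q] op_app_eq[OF T(1) qv]
      by (force simp: block_op_def op_app_zero[OF adj_T] bounded_clop_zero[OF m(1)]
          Re_cinner_prod_def fg cinner_minus_left)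
  qed
  have "cinner (- z1) f = cinner g z2" using g f by (simp add: adj_iff)
  then have "Re (cinner g z2) = - Re (cinner z1 f)"
    by (metis cinner_minus_left uminus_complex.sel(1))
  then have "Re (cinner (m f) f) + Re (cinner (b g) g) = 0"
    using z1[of f] z2[of g] by (simp add: Re_cinner_commute[of f])
  moreover obtain \<mu> \<nu> where \<mu>\<nu>: "\<mu> > 0" "\<mu> * (norm f)\<^sup>2 \<le> Re (cinner (m f) f)"
    "\<nu> > 0" "\<nu> * (norm g)\<^sup>2 \<le> Re (cinner (b g) g)"
    using m(2) b(2) by (auto simp: coercive_def)
  moreover have "0 \<le> \<mu> * (norm f)\<^sup>2" "0 \<le> \<nu> * (norm g)\<^sup>2"
    using \<mu>\<nu> by simp_all
  ultimately have "\<mu> * (norm f)\<^sup>2 = 0" "\<nu> * (norm g)\<^sup>2 = 0" by linarith+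
  then show "h = 0" using \<mu>\<nu> by (simp add: fg zero_prod_def)
qed

lemma block_op_bij: "bij_betw (block_op T b m) dom_block UNIV"
proof -
  obtain C where C: "\<And>p. p \<in> dom_block \<Longrightarrow> norm p \<le> C * norm (block_op T b m p)"
    using block_op_bounded_below by blast
  have "inj_on (block_op T b m) dom_block"
  proof (rule inj_onI)
    fix p p'
    assume p: "p \<in> dom_block" "p' \<in> dom_block" and eq: "block_op T b m p = block_op T b m p'"
    have "norm (p - p') \<le> C * norm (block_op T b m (p - p'))"
      by (rule C[OF subspace_diff[OF block_op_Domain_subspace p]])
    also have "block_op T b m (p - p') = 0"
      by (simp add: block_op_diff[OF p] eq)
    finally show "p = p'" by simp
  qed
  moreover have "block_op T b m ` dom_block = UNIV"
  proof (rule Re_cinner_prod.image_eq_UNIV_if_bounded_below[OF block_op_Domain_subspace, of _ C])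
    show "x \<in> dom_block \<and> block_op T b m x = y"
      if "\<forall>n. X n \<in> dom_block" "X \<longlonglongrightarrow> x" "(\<lambda>n. block_op T b m (X n)) \<longlonglongrightarrow> y" for X x y
      using block_op_closed_graph[of X "fst x" "snd x" "fst y" "snd y"] that by simp
  qed (simp_all add: block_op_add block_op_scaleR C block_op_orthogonal_range)
  ultimately show ?thesis by (simp add: bij_betw_def)
qed

end

section \<open>Graph inner products and boundary data spaces\<close>

lemma norm_Pair_le_bounded_fst:
  assumes "norm (f x) \<le> K * norm x" "0 \<le> K"
  shows "norm (f x, y) \<le> (K + 1) * norm (x, y)"
proof -
  have "norm (f x, y) \<le> K * norm x + norm y"
    using norm_Pair_le[of "f x" y] assms(1) by linarith
  also have "\<dots> \<le> K * norm (x, y) + norm (x, y)"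
    using assms(2) norm_fst_le[of x y] norm_snd_le[where x = x and y = y]
    by (intro add_mono mult_left_mono) auto
  finally show ?thesis by (simp add: algebra_simps)
qed

lemma graph_norm_eq_norm: "graph_norm A u = norm (u, op_app A u)"
  by (simp add: graph_norm_def norm_prod_def)

lemma graph_inner_commute: "graph_inner A u v = cnj (graph_inner A v u)"
  by (simp add: graph_inner_def cinner_commute[of u v] cinner_commute[of "op_app A u"])

lemma graph_inner_self: "graph_inner A u u = complex_of_real ((graph_norm A u)\<^sup>2)"
  by (simp add: graph_inner_def graph_norm_def cinner_self_norm)

context
  fixes A :: "('a::chilbert \<times> 'b::chilbert) set"
  assumes A: "lin_op A"
begin

lemma graph_inner_add_left: "u \<in> Domain A \<Longrightarrow> u' \<in> Domain A \<Longrightarrow>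
    graph_inner A (u + u') v = graph_inner A u v + graph_inner A u' v"
  by (simp add: graph_inner_def op_app_add[OF A] cinner_add_left)

lemma graph_inner_diff_left: "u \<in> Domain A \<Longrightarrow> u' \<in> Domain A \<Longrightarrow>
    graph_inner A (u - u') v = graph_inner A u v - graph_inner A u' v"
  by (simp add: graph_inner_def op_app_diff[OF A] cinner_diff_left)

lemma graph_inner_add_right: "u \<in> Domain A \<Longrightarrow> u' \<in> Domain A \<Longrightarrow>
    graph_inner A v (u + u') = graph_inner A v u + graph_inner A v u'"
  by (simp add: graph_inner_def op_app_add[OF A] cinner_add_right)

lemma graph_inner_diff_right: "u \<in> Domain A \<Longrightarrow> u' \<in> Domain A \<Longrightarrow>
    graph_inner A v (u - u') = graph_inner A v u - graph_inner A v u'"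
  by (simp add: graph_inner_def op_app_diff[OF A] cinner_diff_right)

lemma graph_inner_scaleC_left: "u \<in> Domain A \<Longrightarrow> graph_inner A (c *\<^sub>C u) v = c * graph_inner A u v"
  by (simp add: graph_inner_def op_app_scaleC[OF A] cinner_scaleC_left algebra_simps)

lemma graph_inner_scaleC_right: "u \<in> Domain A \<Longrightarrow> graph_inner A v (c *\<^sub>C u) = cnj c * graph_inner A v u"
  by (simp add: graph_inner_def op_app_scaleC[OF A] cinner_scaleC_right algebra_simps)

lemma graph_inner_self_eq_0: "graph_inner A u u = 0 \<Longrightarrow> u = 0"
  by (simp add: graph_inner_self graph_norm_eq_norm zero_prod_def)

end

context
  fixes A A0 :: "('a::chilbert \<times> 'b::chilbert) set"
  assumes A: "lin_op A" and A0: "lin_op A0" "closed A0" and sub: "A0 \<subseteq> A"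
begin

lemma op_app_subset: "x \<in> Domain A0 \<Longrightarrow> op_app A0 x = op_app A x"
  using op_app_in_graph[OF A0(1)] sub op_app_eq[OF A] by (metis subsetD)

lemma BD_subset_Domain: "BD A A0 \<subseteq> Domain A"
  by (auto simp: BD_def)

lemma BD_orthogonal: "w \<in> BD A A0 \<Longrightarrow> v \<in> Domain A0 \<Longrightarrow> graph_inner A v w = 0"
  by (auto simp: BD_def)

lemma BD_orthogonal': "w \<in> BD A A0 \<Longrightarrow> v \<in> Domain A0 \<Longrightarrow> graph_inner A w v = 0"
  using BD_orthogonal graph_inner_commute by (metis complex_cnj_zero)

lemma BD_add: "w \<in> BD A A0 \<Longrightarrow> w' \<in> BD A A0 \<Longrightarrow> w + w' \<in> BD A A0"
  unfolding BD_def using lin_op_Domain_add[OF A] graph_inner_add_right[OF A] by auto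

lemma BD_diff: "w \<in> BD A A0 \<Longrightarrow> w' \<in> BD A A0 \<Longrightarrow> w - w' \<in> BD A A0"
  unfolding BD_def using lin_op_Domain_diff[OF A] graph_inner_diff_right[OF A] by auto

lemma BD_scaleC: "w \<in> BD A A0 \<Longrightarrow> c *\<^sub>C w \<in> BD A A0"
  unfolding BD_def using lin_op_Domain_scaleC[OF A] graph_inner_scaleC_right[OF A] by auto

lemma BD_Int_Domain: "w \<in> BD A A0 \<Longrightarrow> w \<in> Domain A0 \<Longrightarrow> w = 0"
  using BD_orthogonal graph_inner_self_eq_0[OF A] by blast

text \<open>Project the graph point of \<open>x\<close> onto the closed subspace \<open>A0\<close> of \<open>H0 \<times> H1\<close>.\<close>
lemma exists_BD_decomposition:
  assumes x: "x \<in> Domain A"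
  shows "\<exists>w\<in>BD A A0. x - w \<in> Domain A0"
proof -
  obtain v z where vz: "(v, z) \<in> A0"
    and orth: "\<And>r. r \<in> A0 \<Longrightarrow> Re_cinner_prod ((x, op_app A x) - (v, z)) r = 0"
    using Re_cinner_prod.exists_orthogonal_projection[OF lin_op_subspace[OF A0(1)] A0(2)]
    by fast
  have v: "v \<in> Domain A0" "v \<in> Domain A" using vz sub by auto
  have z: "z = op_app A v" using op_app_eq[OF A] sub vz by blast
  define w where "w = x - v"
  have w: "w \<in> Domain A" unfolding w_def by (rule lin_op_Domain_diff[OF A x v(2)])
  have Re_orth: "Re (graph_inner A v' w) = 0" if "v' \<in> Domain A0" for v'
  proof -
    have "(v', op_app A v') \<in> A0"
      using op_app_in_graph[OF A0(1) that] op_app_subset[OF that] by simp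
    from orth[OF this] show ?thesis
      by (simp add: Re_cinner_prod_def graph_inner_def w_def op_app_diff[OF A x v(2)] z
          Re_cinner_commute)
  qed
  have "graph_inner A v' w = 0" if v': "v' \<in> Domain A0" for v'
  proof -
    have "\<i> *\<^sub>C v' \<in> Domain A0" by (rule lin_op_Domain_scaleC[OF A0(1) v'])
    then have "Re (\<i> * graph_inner A v' w) = 0"
      using Re_orth graph_inner_scaleC_left[OF A] v' sub by fastforce
    with Re_orth[OF v'] show ?thesis by (simp add: complex_eq_iff)
  qed
  with w have "w \<in> BD A A0" by (simp add: BD_def)
  moreover have "x - w \<in> Domain A0" using v by (simp add: w_def)
  ultimately show ?thesis by blast
qed

lemma proj_BD_eqI:
  assumes x: "x \<in> Domain A" and w: "w \<in> BD A A0" and xw: "x - w \<in> Domain A0"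
  shows "proj_BD A A0 x = w"
  unfolding proj_BD_def
proof (rule the_equality)
  show "w \<in> BD A A0 \<and> (\<forall>v\<in>BD A A0. graph_inner A (x - w) v = 0)"
    using w xw BD_orthogonal by blast
next
  fix w'
  assume w': "w' \<in> BD A A0 \<and> (\<forall>v\<in>BD A A0. graph_inner A (x - w') v = 0)"
  have d: "w - w' \<in> BD A A0" using BD_diff w w' by blast
  have "w \<in> Domain A" "w' \<in> Domain A" using w w' BD_subset_Domain by auto
  then have "graph_inner A ((x - w') - (x - w)) (w - w')
      = graph_inner A (x - w') (w - w') - graph_inner A (x - w) (w - w')"
    using x by (intro graph_inner_diff_left[OF A] lin_op_Domain_diff[OF A])
  then have "graph_inner A (w - w') (w - w')
      = graph_inner A (x - w') (w - w') - graph_inner A (x - w) (w - w')"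
    by simp
  also have "\<dots> = 0" using w' d BD_orthogonal[OF d xw] by simp
  finally have "w - w' = 0" by (rule graph_inner_self_eq_0[OF A])
  then show "w' = w" by simp
qed

lemma proj_BD:
  assumes "x \<in> Domain A"
  shows "proj_BD A A0 x \<in> BD A A0" and "x - proj_BD A A0 x \<in> Domain A0"
  using exists_BD_decomposition[OF assms] proj_BD_eqI[OF assms] by metis+

lemma proj_BD_add:
  assumes "x \<in> Domain A" "y \<in> Domain A"
  shows "proj_BD A A0 (x + y) = proj_BD A A0 x + proj_BD A A0 y"
proof (rule proj_BD_eqI)
  show "x + y \<in> Domain A" using lin_op_Domain_add[OF A] assms .
  show "proj_BD A A0 x + proj_BD A A0 y \<in> BD A A0" using BD_add proj_BD(1) assms by blast
  have "x + y - (proj_BD A A0 x + proj_BD A A0 y) = (x - proj_BD A A0 x) + (y - proj_BD A A0 y)"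
    by simp
  then show "x + y - (proj_BD A A0 x + proj_BD A A0 y) \<in> Domain A0"
    using lin_op_Domain_add[OF A0(1)] proj_BD(2) assms by metis
qed

lemma proj_BD_scaleC:
  assumes "x \<in> Domain A"
  shows "proj_BD A A0 (c *\<^sub>C x) = c *\<^sub>C proj_BD A A0 x"
proof (rule proj_BD_eqI)
  show "c *\<^sub>C x \<in> Domain A" using lin_op_Domain_scaleC[OF A] assms .
  show "c *\<^sub>C proj_BD A A0 x \<in> BD A A0" using BD_scaleC proj_BD(1) assms by blast
  have "c *\<^sub>C x - c *\<^sub>C proj_BD A A0 x = c *\<^sub>C (x - proj_BD A A0 x)"
    by (simp add: scaleC_diff_right)
  then show "c *\<^sub>C x - c *\<^sub>C proj_BD A A0 x \<in> Domain A0"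
    using lin_op_Domain_scaleC[OF A0(1)] proj_BD(2) assms by metis
qed

lemma graph_norm_proj_BD_le:
  assumes x: "x \<in> Domain A"
  shows "graph_norm A (proj_BD A A0 x) \<le> graph_norm A x"
proof -
  define w v where "w = proj_BD A A0 x" and "v = x - w"
  have w: "w \<in> BD A A0" and v: "v \<in> Domain A0"
    using proj_BD[OF x] by (auto simp: w_def v_def)
  have wA: "w \<in> Domain A" and vA: "v \<in> Domain A"
    using w v BD_subset_Domain sub by auto
  have "x = w + v" by (simp add: v_def)
  then have "graph_inner A x x = graph_inner A w w + graph_inner A v v + graph_inner A w v + graph_inner A v w"
    using wA vA lin_op_Domain_add[OF A]
    by (simp add: graph_inner_add_left[OF A] graph_inner_add_right[OF A] algebra_simps)
  also have "\<dots> = graph_inner A w w + graph_inner A v v"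
    using BD_orthogonal[OF w v] BD_orthogonal'[OF w v] by simp
  finally have "Re (graph_inner A x x) = Re (graph_inner A w w) + Re (graph_inner A v v)"
    by simp
  then have "(graph_norm A x)\<^sup>2 = (graph_norm A w)\<^sup>2 + (graph_norm A v)\<^sup>2"
    by (simp only: graph_inner_self Re_complex_of_real)
  then have "(graph_norm A w)\<^sup>2 \<le> (graph_norm A x)\<^sup>2" by simp
  then show ?thesis
    unfolding w_def by (rule power2_le_imp_le) (simp add: graph_norm_def)
qed

end

section \<open>The Dirichlet-to-Neumann operator\<close>

definition dirichlet_sol :: "('a::chilbert \<times> 'b::chilbert) set \<Rightarrow> ('b \<times> 'a) set
    \<Rightarrow> ('b \<Rightarrow> 'b) \<Rightarrow> ('a \<Rightarrow> 'a) \<Rightarrow> 'a \<Rightarrow> 'a \<Rightarrow> bool" where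
  "dirichlet_sol G D a m u0 u \<longleftrightarrow> u \<in> Domain G \<and> a (op_app G u) \<in> Domain D
     \<and> m u - op_app D (a (op_app G u)) = 0 \<and> u - u0 \<in> Domain (ringG D)"

lemma dtn_sol_eq_The: "dtn_sol G D a m u0 = (THE u. dirichlet_sol G D a m u0 u)"
  by (simp add: dtn_sol_def dirichlet_sol_def)

locale dtn_setting =
  fixes G :: "('a::chilbert \<times> 'b::chilbert) set" and D :: "('b \<times> 'a) set"
    and a :: "'b \<Rightarrow> 'b" and m :: "'a \<Rightarrow> 'a"
  assumes closed_G: "closed_op G" and dense_G: "densely_defined G"
    and closed_D: "closed_op D" and dense_D: "densely_defined D"
    and neg_adj_G_subset: "neg_op (adj G) \<subseteq> D"
    and a: "bounded_clop a" "coercive a"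
    and m: "bounded_clop m" "coercive m"
begin

lemma lin_op_G: "lin_op G" and lin_op_D: "lin_op D" and closed_graph_D: "closed D"
  using closed_G closed_D by (simp_all add: closed_op_def)

lemma lin_op_ringG: "lin_op (ringG D)" and lin_op_ringD: "lin_op (ringD G)"
  by (simp_all add: ringG_def ringD_def lin_op_neg_op lin_op_adj dense_D dense_G)

lemma closed_ringG: "closed (ringG D)" and closed_ringD: "closed (ringD G)"
  by (simp_all add: ringG_def ringD_def closed_neg_op closed_adj)

lemma ringD_subset_D: "ringD G \<subseteq> D"
  using neg_adj_G_subset by (simp add: ringD_def)

lemma adj_ringD: "adj (ringD G) = neg_op G"
  by (simp add: ringD_def adj_neg_op adj_adj closed_G)

lemma ringG_subset_G: "ringG D \<subseteq> G"
  using neg_op_mono[OF adj_antimono[OF ringD_subset_D]] by (simp add: ringG_def adj_ringD)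

lemma op_app_ringG: "x \<in> Domain (ringG D) \<Longrightarrow> op_app (ringG D) x = op_app G x"
  by (rule op_app_subset[OF lin_op_G lin_op_ringG closed_ringG ringG_subset_G])

lemma op_app_ringD: "x \<in> Domain (ringD G) \<Longrightarrow> op_app (ringD G) x = op_app D x"
  by (rule op_app_subset[OF lin_op_D lin_op_ringD closed_ringD ringD_subset_D])

lemma BD_G_subset: "BD G (ringG D) \<subseteq> Domain G"
  by (rule BD_subset_Domain[OF lin_op_G lin_op_ringG closed_ringG ringG_subset_G])

lemma BD_D_subset: "BD D (ringD G) \<subseteq> Domain D"
  by (rule BD_subset_Domain[OF lin_op_D lin_op_ringD closed_ringD ringD_subset_D])

lemma mat1_eq_block_op: "mat1 G D a m p = block_op D (inv a) m p"
  if "p \<in> Domain (ringG D) \<times> Domain D"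
  using that by (cases p) (simp add: mat1_def block_op_def ringG_def op_app_neg_op[OF lin_op_adj[OF dense_D]])

lemma mat2_eq_block_op: "mat2 G D a m p = block_op (ringD G) (inv a) m p"
  if "p \<in> Domain G \<times> Domain (ringD G)"
  using that by (cases p) (simp add: mat2_def block_op_def adj_ringD op_app_neg_op[OF lin_op_G])

lemma mat1_bij: "bij_betw (mat1 G D a m) (Domain (ringG D) \<times> Domain D) UNIV"
  and mat1_bounded_below: "\<exists>C>0. \<forall>p\<in>Domain (ringG D) \<times> Domain D. norm p \<le> C * norm (mat1 G D a m p)"
proof -
  have dom: "Domain (ringG D) = Domain (adj D)" by (simp add: ringG_def)
  have "bij_betw (block_op D (inv a) m) (Domain (adj D) \<times> Domain D) UNIV"
    and "\<exists>C>0. \<forall>p\<in>Domain (adj D) \<times> Domain D. norm p \<le> C * norm (block_op D (inv a) m p)"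
    by (intro block_op_bij block_op_bounded_below lin_op_D closed_graph_D lin_op_adj dense_D
        bounded_clop_inv coercive_inv a m)+
  then show "bij_betw (mat1 G D a m) (Domain (ringG D) \<times> Domain D) UNIV"
    and "\<exists>C>0. \<forall>p\<in>Domain (ringG D) \<times> Domain D. norm p \<le> C * norm (mat1 G D a m p)"
    using mat1_eq_block_op bij_betw_cong[of "Domain (ringG D) \<times> Domain D" "mat1 G D a m"]
    unfolding dom by auto
qed

lemma mat2_bij: "bij_betw (mat2 G D a m) (Domain G \<times> Domain (ringD G)) UNIV"
  and mat2_bounded_below: "\<exists>C>0. \<forall>p\<in>Domain G \<times> Domain (ringD G). norm p \<le> C * norm (mat2 G D a m p)"
proof -
  have dom: "Domain G = Domain (adj (ringD G))" by (simp add: adj_ringD)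
  have lin_adj: "lin_op (adj (ringD G))" by (simp add: adj_ringD lin_op_neg_op lin_op_G)
  have "bij_betw (block_op (ringD G) (inv a) m) (Domain (adj (ringD G)) \<times> Domain (ringD G)) UNIV"
    and "\<exists>C>0. \<forall>p\<in>Domain (adj (ringD G)) \<times> Domain (ringD G).
      norm p \<le> C * norm (block_op (ringD G) (inv a) m p)"
    by (intro block_op_bij block_op_bounded_below lin_op_ringD closed_ringD lin_adj
        bounded_clop_inv coercive_inv a m)+
  then show "bij_betw (mat2 G D a m) (Domain G \<times> Domain (ringD G)) UNIV"
    and "\<exists>C>0. \<forall>p\<in>Domain G \<times> Domain (ringD G). norm p \<le> C * norm (mat2 G D a m p)"
    using mat2_eq_block_op bij_betw_cong[of "Domain G \<times> Domain (ringD G)" "mat2 G D a m"]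
    unfolding dom by auto
qed

definition homogeneous_sol :: "'a \<Rightarrow> bool" where
  "homogeneous_sol u \<longleftrightarrow> u \<in> Domain G \<and> a (op_app G u) \<in> Domain D \<and> op_app D (a (op_app G u)) = m u"

lemma dirichlet_sol_iff:
  "dirichlet_sol G D a m u0 u \<longleftrightarrow> homogeneous_sol u \<and> u - u0 \<in> Domain (ringG D)"
  by (auto simp: dirichlet_sol_def homogeneous_sol_def)

lemma homogeneous_sol_add:
  assumes "homogeneous_sol u" "homogeneous_sol v"
  shows "homogeneous_sol (u + v)"
  using assms
  by (simp add: homogeneous_sol_def lin_op_Domain_add[OF lin_op_G] op_app_add[OF lin_op_G]
      bounded_clop_add[OF a(1)] lin_op_Domain_add[OF lin_op_D] op_app_add[OF lin_op_D]
      bounded_clop_add[OF m(1)])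

lemma homogeneous_sol_scaleC:
  assumes "homogeneous_sol u"
  shows "homogeneous_sol (c *\<^sub>C u)"
  using assms
  by (simp add: homogeneous_sol_def lin_op_Domain_scaleC[OF lin_op_G] op_app_scaleC[OF lin_op_G]
      bounded_clop_scaleC[OF a(1)] lin_op_Domain_scaleC[OF lin_op_D] op_app_scaleC[OF lin_op_D]
      bounded_clop_scaleC[OF m(1)])

lemma homogeneous_sol_diff:
  assumes "homogeneous_sol u" "homogeneous_sol v"
  shows "homogeneous_sol (u - v)"
  using homogeneous_sol_add[OF assms(1) homogeneous_sol_scaleC[OF assms(2), of "-1"]]
  by (simp add: scaleC_minus_one)

text \<open>Zero Dirichlet data: \<open>(u, a G u)\<close> lies in the kernel of \<^const>\<open>mat1\<close>.\<close>
lemma homogeneous_sol_Dirichlet_eq_0: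
  assumes u: "homogeneous_sol u" and u0: "u \<in> Domain (ringG D)"
  shows "u = 0"
proof -
  obtain C where C: "\<And>p. p \<in> Domain (ringG D) \<times> Domain D \<Longrightarrow> norm p \<le> C * norm (mat1 G D a m p)"
    using mat1_bounded_below by blast
  have "mat1 G D a m (u, a (op_app G u)) = 0"
    using u u0 by (simp add: mat1_def homogeneous_sol_def op_app_ringG coercive_inv_apply[OF a]
        zero_prod_def)
  then have "norm (u, a (op_app G u)) \<le> 0"
    using C[of "(u, a (op_app G u))"] u u0 by (simp add: homogeneous_sol_def)
  then show "u = 0" by (simp add: zero_prod_def)
qed

text \<open>Zero Neumann data: \<open>(u, a G u)\<close> lies in the kernel of \<^const>\<open>mat2\<close>.\<close>
lemma homogeneous_sol_Neumann_eq_0: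
  assumes u: "homogeneous_sol u" and q0: "a (op_app G u) \<in> Domain (ringD G)"
  shows "u = 0"
proof -
  obtain C where C: "\<And>p. p \<in> Domain G \<times> Domain (ringD G) \<Longrightarrow> norm p \<le> C * norm (mat2 G D a m p)"
    using mat2_bounded_below by blast
  have "mat2 G D a m (u, a (op_app G u)) = 0"
    using u q0 by (simp add: mat2_def homogeneous_sol_def op_app_ringD coercive_inv_apply[OF a]
        zero_prod_def)
  then have "norm (u, a (op_app G u)) \<le> 0"
    using C[of "(u, a (op_app G u))"] u q0 by (simp add: homogeneous_sol_def)
  then show "u = 0" by (simp add: zero_prod_def)
qed

lemma dirichlet_sol_unique:
  assumes "dirichlet_sol G D a m u0 u" "dirichlet_sol G D a m u0 v"
  shows "u = v"
proof -
  have "u - v = (u - u0) - (v - u0)" by simp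
  then have "u - v \<in> Domain (ringG D)"
    using assms lin_op_Domain_diff[OF lin_op_ringG] by (metis dirichlet_sol_iff)
  with assms show ?thesis
    using homogeneous_sol_Dirichlet_eq_0 homogeneous_sol_diff by (force simp: dirichlet_sol_iff)
qed

lemma dirichlet_sol_mat1_inv:
  assumes u0: "u0 \<in> Domain G"
    and p: "p = the_inv_into (Domain (ringG D) \<times> Domain D) (mat1 G D a m) (- m u0, op_app G u0)"
  shows "dirichlet_sol G D a m u0 (fst p + u0)" and "a (op_app G (fst p + u0)) = snd p"
proof -
  obtain w q where wq: "p = (w, q)" by fastforce
  have "p \<in> Domain (ringG D) \<times> Domain D" "mat1 G D a m p = (- m u0, op_app G u0)"
    unfolding p by (rule the_inv_into_onto_UNIV[OF mat1_bij])+
  then have dom: "w \<in> Domain (ringG D)" "q \<in> Domain D"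
    and eq: "m w - op_app D q = - m u0" "- op_app (ringG D) w + inv a q = op_app G u0"
    by (auto simp: wq mat1_def)
  have w: "w \<in> Domain G" using dom(1) ringG_subset_G by blast
  have "inv a q = op_app G (w + u0)"
    using eq(2) op_app_ringG[OF dom(1)] op_app_add[OF lin_op_G w u0] by (simp add: algebra_simps)
  then have aG: "a (op_app G (w + u0)) = q"
    using coercive_apply_inv[OF a] by metis
  have "op_app D q = m (w + u0)"
    using eq(1) by (simp add: bounded_clop_add[OF m(1)] algebra_simps)
  then show "dirichlet_sol G D a m u0 (fst p + u0)" "a (op_app G (fst p + u0)) = snd p"
    using aG dom lin_op_Domain_add[OF lin_op_G w u0]
    by (simp_all add: wq dirichlet_sol_def)
qed

lemma dtn_sol_eqI: "dirichlet_sol G D a m u0 u \<Longrightarrow> dtn_sol G D a m u0 = u"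
  unfolding dtn_sol_eq_The by (blast intro: dirichlet_sol_unique)

lemma dirichlet_sol_dtn_sol: "u0 \<in> Domain G \<Longrightarrow> dirichlet_sol G D a m u0 (dtn_sol G D a m u0)"
  using dirichlet_sol_mat1_inv(1) dtn_sol_eqI by metis

lemma homogeneous_sol_dtn_sol: "u0 \<in> Domain G \<Longrightarrow> homogeneous_sol (dtn_sol G D a m u0)"
  using dirichlet_sol_dtn_sol dirichlet_sol_iff by blast

lemma DtN_eq_mat1_inv:
  assumes "u0 \<in> Domain G"
  shows "DtN G D a m u0 = proj_BD D (ringD G)
    (snd (the_inv_into (Domain (ringG D) \<times> Domain D) (mat1 G D a m) (- m u0, op_app G u0)))"
  using dirichlet_sol_mat1_inv[OF assms refl] by (simp add: DtN_def dtn_sol_eqI)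

lemma dtn_sol_add:
  assumes "u0 \<in> Domain G" "v0 \<in> Domain G"
  shows "dtn_sol G D a m (u0 + v0) = dtn_sol G D a m u0 + dtn_sol G D a m v0"
proof (rule dtn_sol_eqI)
  have "dtn_sol G D a m u0 + dtn_sol G D a m v0 - (u0 + v0)
      = (dtn_sol G D a m u0 - u0) + (dtn_sol G D a m v0 - v0)" by simp
  then show "dirichlet_sol G D a m (u0 + v0) (dtn_sol G D a m u0 + dtn_sol G D a m v0)"
    using dirichlet_sol_dtn_sol[OF assms(1)] dirichlet_sol_dtn_sol[OF assms(2)]
      homogeneous_sol_add lin_op_Domain_add[OF lin_op_ringG]
    by (metis dirichlet_sol_iff)
qed

lemma dtn_sol_scaleC:
  assumes "u0 \<in> Domain G"
  shows "dtn_sol G D a m (c *\<^sub>C u0) = c *\<^sub>C dtn_sol G D a m u0"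
proof (rule dtn_sol_eqI)
  have "c *\<^sub>C dtn_sol G D a m u0 - c *\<^sub>C u0 = c *\<^sub>C (dtn_sol G D a m u0 - u0)"
    by (simp add: scaleC_diff_right)
  then show "dirichlet_sol G D a m (c *\<^sub>C u0) (c *\<^sub>C dtn_sol G D a m u0)"
    using dirichlet_sol_dtn_sol[OF assms] homogeneous_sol_scaleC lin_op_Domain_scaleC[OF lin_op_ringG]
    by (metis dirichlet_sol_iff)
qed

lemma aG_dtn_sol_Domain: "u0 \<in> Domain G \<Longrightarrow> a (op_app G (dtn_sol G D a m u0)) \<in> Domain D"
  using homogeneous_sol_dtn_sol by (simp add: homogeneous_sol_def)

lemma DtN_add:
  assumes "u0 \<in> Domain G" "v0 \<in> Domain G"
  shows "DtN G D a m (u0 + v0) = DtN G D a m u0 + DtN G D a m v0"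
  using homogeneous_sol_dtn_sol[OF assms(1)] homogeneous_sol_dtn_sol[OF assms(2)]
  by (simp add: DtN_def dtn_sol_add[OF assms] homogeneous_sol_def op_app_add[OF lin_op_G]
      bounded_clop_add[OF a(1)] proj_BD_add[OF lin_op_D lin_op_ringD closed_ringD ringD_subset_D])

lemma DtN_scaleC:
  assumes "u0 \<in> Domain G"
  shows "DtN G D a m (c *\<^sub>C u0) = c *\<^sub>C DtN G D a m u0"
  using homogeneous_sol_dtn_sol[OF assms]
  by (simp add: DtN_def dtn_sol_scaleC[OF assms] homogeneous_sol_def op_app_scaleC[OF lin_op_G]
      bounded_clop_scaleC[OF a(1)] proj_BD_scaleC[OF lin_op_D lin_op_ringD closed_ringD ringD_subset_D])

lemma DtN_in_BD: "u0 \<in> Domain G \<Longrightarrow> DtN G D a m u0 \<in> BD D (ringD G)"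
  unfolding DtN_def by (intro proj_BD(1)[OF lin_op_D lin_op_ringD closed_ringD ringD_subset_D] aG_dtn_sol_Domain)

text \<open>If \<open>DtN u0 = 0\<close>, the solution has zero Neumann data, hence vanishes, so \<open>u0\<close> has zero
  Dirichlet data.\<close>
lemma DtN_eq_0:
  assumes u0: "u0 \<in> BD G (ringG D)" and "DtN G D a m u0 = 0"
  shows "u0 = 0"
proof -
  have "u0 \<in> Domain G" using u0 BD_G_subset by blast
  define u where "u = dtn_sol G D a m u0"
  have u: "homogeneous_sol u" "u - u0 \<in> Domain (ringG D)"
    using dirichlet_sol_dtn_sol[OF \<open>u0 \<in> Domain G\<close>] by (simp_all add: u_def dirichlet_sol_iff)
  have "a (op_app G u) - DtN G D a m u0 \<in> Domain (ringD G)"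
    using proj_BD(2)[OF lin_op_D lin_op_ringD closed_ringD ringD_subset_D] u(1)
    by (simp add: DtN_def u_def homogeneous_sol_def)
  then have "u = 0"
    using homogeneous_sol_Neumann_eq_0[OF u(1)] assms(2) by simp
  then have "- u0 \<in> Domain (ringG D)" using u(2) by simp
  then have "u0 \<in> Domain (ringG D)"
    using lin_op_Domain_scaleC[OF lin_op_ringG, of "- u0" "-1"] by (simp add: scaleC_minus_one)
  then show ?thesis
    by (rule BD_Int_Domain[OF lin_op_G lin_op_ringG closed_ringG ringG_subset_G u0])
qed

lemma DtN_inj: "inj_on (DtN G D a m) (BD G (ringG D))"
proof (rule inj_onI)
  fix u v
  assume u: "u \<in> BD G (ringG D)" and v: "v \<in> BD G (ringG D)" and eq: "DtN G D a m u = DtN G D a m v"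
  have d: "u - v \<in> BD G (ringG D)" by (rule BD_diff[OF lin_op_G lin_op_ringG closed_ringG ringG_subset_G u v])
  have "DtN G D a m u = DtN G D a m (u - v) + DtN G D a m v"
    using DtN_add d v BD_G_subset by (metis diff_add_cancel subsetD)
  then have "DtN G D a m (u - v) = 0" using eq by simp
  then show "u = v" using DtN_eq_0[OF d] by simp
qed

text \<open>With \<open>(w, r) = mat2\<^sup>-\<^sup>1 (D q0, - a\<^sup>-\<^sup>1 q0)\<close>, \<open>w\<close> solves the homogeneous equation and
  \<open>a G w = r + q0\<close> with \<open>r \<in> Domain (ringD G)\<close>, so the Neumann data of \<open>w\<close> is \<open>q0\<close>.\<close>
lemma DtN_proj_BD_mat2_inv:
  assumes q0: "q0 \<in> BD D (ringD G)"
    and p: "p = the_inv_into (Domain G \<times> Domain (ringD G)) (mat2 G D a m) (op_app D q0, - inv a q0)"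
  shows "proj_BD G (ringG D) (fst p) \<in> BD G (ringG D)"
    and "DtN G D a m (proj_BD G (ringG D) (fst p)) = q0"
    and "op_app G (fst p) = inv a (snd p + q0)"
proof -
  obtain w r where wr: "p = (w, r)" by fastforce
  have "p \<in> Domain G \<times> Domain (ringD G)" "mat2 G D a m p = (op_app D q0, - inv a q0)"
    unfolding p by (rule the_inv_into_onto_UNIV[OF mat2_bij])+
  then have dom: "w \<in> Domain G" "r \<in> Domain (ringD G)"
    and eq: "m w - op_app (ringD G) r = op_app D q0" "- op_app G w + inv a r = - inv a q0"
    by (auto simp: wr mat2_def)
  have dom': "r \<in> Domain D" "q0 \<in> Domain D" using dom(2) ringD_subset_D q0 BD_D_subset by auto
  have Gw: "op_app G w = inv a (r + q0)"
    using eq(2) by (simp add: bounded_clop_add[OF bounded_clop_inv[OF a]] algebra_simps)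
  then have aGw: "a (op_app G w) = r + q0" by (simp add: coercive_apply_inv[OF a])
  define u0 where "u0 = proj_BD G (ringG D) w"
  have u0: "u0 \<in> BD G (ringG D)" "w - u0 \<in> Domain (ringG D)"
    using proj_BD[OF lin_op_G lin_op_ringG closed_ringG ringG_subset_G dom(1)] by (simp_all add: u0_def)
  have "homogeneous_sol w"
    using eq(1) dom dom' aGw lin_op_Domain_add[OF lin_op_D dom']
    by (simp add: homogeneous_sol_def op_app_add[OF lin_op_D] op_app_ringD algebra_simps)
  then have "dtn_sol G D a m u0 = w" by (intro dtn_sol_eqI) (simp add: dirichlet_sol_iff u0(2))
  then have "DtN G D a m u0 = proj_BD D (ringD G) (r + q0)" by (simp add: DtN_def aGw)
  also have "\<dots> = q0"
    using dom(2) lin_op_Domain_add[OF lin_op_D dom']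
    by (intro proj_BD_eqI[OF lin_op_D lin_op_ringD closed_ringD ringD_subset_D _ q0]) simp_all
  finally show "proj_BD G (ringG D) (fst p) \<in> BD G (ringG D)"
    and "DtN G D a m (proj_BD G (ringG D) (fst p)) = q0"
    and "op_app G (fst p) = inv a (snd p + q0)"
    using u0 Gw by (simp_all add: wr u0_def)
qed

lemma DtN_bij: "bij_betw (DtN G D a m) (BD G (ringG D)) (BD D (ringD G))"
  unfolding bij_betw_def
proof
  show "DtN G D a m ` BD G (ringG D) = BD D (ringD G)"
  proof (intro equalityI subsetI)
    fix q0
    assume "q0 \<in> BD D (ringD G)"
    with DtN_proj_BD_mat2_inv(1,2)[OF this refl] show "q0 \<in> DtN G D a m ` BD G (ringG D)"
      by (metis image_eqI)
  qed (use DtN_in_BD BD_G_subset in blast)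
qed (rule DtN_inj)

lemma DtN_inv_eq_mat2_inv:
  assumes "q0 \<in> BD D (ringD G)"
  shows "the_inv_into (BD G (ringG D)) (DtN G D a m) q0 = proj_BD G (ringG D)
    (fst (the_inv_into (Domain G \<times> Domain (ringD G)) (mat2 G D a m) (op_app D q0, - inv a q0)))"
  using DtN_proj_BD_mat2_inv[OF assms refl] by (intro the_inv_into_f_eq[OF DtN_inj]) auto

lemma DtN_bounded: "\<exists>C. \<forall>u0\<in>BD G (ringG D). graph_norm D (DtN G D a m u0) \<le> C * graph_norm G u0"
proof -
  obtain C where C: "C > 0" "\<And>p. p \<in> Domain (ringG D) \<times> Domain D \<Longrightarrow> norm p \<le> C * norm (mat1 G D a m p)"
    using mat1_bounded_below by blast
  obtain K where K: "K > 0" "\<And>x. norm (m x) \<le> K * norm x"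
    using bounded_clop_pos_bound[OF m(1)] by blast
  define B where "B = C * (K + 1)"
  have "graph_norm D (DtN G D a m u0) \<le> (B + K * (B + 1)) * graph_norm G u0"
    if "u0 \<in> BD G (ringG D)" for u0
  proof -
    have u0: "u0 \<in> Domain G" using that BD_G_subset by blast
    define N where "N = graph_norm G u0"
    define p where "p = the_inv_into (Domain (ringG D) \<times> Domain D) (mat1 G D a m) (- m u0, op_app G u0)"
    have p: "p \<in> Domain (ringG D) \<times> Domain D" "mat1 G D a m p = (- m u0, op_app G u0)"
      unfolding p_def by (rule the_inv_into_onto_UNIV[OF mat1_bij])+
    have "norm p \<le> C * norm (- m u0, op_app G u0)" using C(2)[OF p(1)] p(2) by simp
    also have "\<dots> \<le> C * ((K + 1) * N)"
      using norm_Pair_le_bounded_fst[of "\<lambda>x. - m x" u0 K] K C(1)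
      by (intro mult_left_mono) (simp_all add: N_def graph_norm_eq_norm)
    finally have P: "norm p \<le> B * N" by (simp add: B_def)
    have "homogeneous_sol (fst p + u0)" and aG: "a (op_app G (fst p + u0)) = snd p"
      using dirichlet_sol_mat1_inv[OF u0 p_def] by (simp_all add: dirichlet_sol_iff)
    then have D_snd: "snd p \<in> Domain D" "op_app D (snd p) = m (fst p + u0)"
      by (simp_all add: homogeneous_sol_def)
    have "graph_norm D (DtN G D a m u0) \<le> graph_norm D (snd p)"
      unfolding DtN_eq_mat1_inv[OF u0] p_def[symmetric]
      by (rule graph_norm_proj_BD_le[OF lin_op_D lin_op_ringD closed_ringD ringD_subset_D D_snd(1)])
    also have "\<dots> \<le> norm (snd p) + K * (norm (fst p) + norm u0)"
      using norm_Pair_le[of "snd p" "m (fst p + u0)"] K(2)[of "fst p + u0"]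
        norm_triangle_ineq[of "fst p" u0] K(1)
      by (simp add: graph_norm_eq_norm D_snd) (smt (verit) mult_left_mono)
    also have "\<dots> \<le> B * N + K * (B * N + N)"
      using P norm_fst_le[of "fst p" "snd p"] norm_snd_le[where x = "fst p" and y = "snd p"] norm_fst_le[of u0 "op_app G u0"] K(1)
      by (intro add_mono mult_left_mono) (simp_all add: N_def graph_norm_eq_norm)
    also have "\<dots> = (B + K * (B + 1)) * N" by (simp add: algebra_simps)
    finally show ?thesis by (simp add: N_def)
  qed
  then show ?thesis by blast
qed

lemma DtN_inv_bounded: "\<exists>C. \<forall>u0\<in>BD G (ringG D). graph_norm G u0 \<le> C * graph_norm D (DtN G D a m u0)"
proof -
  obtain C where C: "C > 0" "\<And>p. p \<in> Domain G \<times> Domain (ringD G) \<Longrightarrow> norm p \<le> C * norm (mat2 G D a m p)"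
    using mat2_bounded_below by blast
  obtain L where L: "L > 0" "\<And>x. norm (inv a x) \<le> L * norm x"
    using bounded_clop_pos_bound[OF bounded_clop_inv[OF a]] by blast
  define B where "B = C * (L + 1)"
  have "graph_norm G u0 \<le> (B + L * (B + 1)) * graph_norm D (DtN G D a m u0)"
    if u0: "u0 \<in> BD G (ringG D)" for u0
  proof -
    define q0 where "q0 = DtN G D a m u0"
    have q0: "q0 \<in> BD D (ringD G)"
      unfolding q0_def using u0 BD_G_subset by (intro DtN_in_BD) blast
    define N where "N = graph_norm D q0"
    define p where "p = the_inv_into (Domain G \<times> Domain (ringD G)) (mat2 G D a m) (op_app D q0, - inv a q0)"
    have p: "p \<in> Domain G \<times> Domain (ringD G)" "mat2 G D a m p = (op_app D q0, - inv a q0)"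
      unfolding p_def by (rule the_inv_into_onto_UNIV[OF mat2_bij])+
    have "norm p \<le> C * norm (- inv a q0, op_app D q0)"
      using C(2)[OF p(1)] p(2) by (simp add: norm_prod_def add.commute)
    also have "\<dots> \<le> C * ((L + 1) * N)"
      using norm_Pair_le_bounded_fst[of "\<lambda>x. - inv a x" q0 L] L C(1)
      by (intro mult_left_mono) (simp_all add: N_def graph_norm_eq_norm)
    finally have P: "norm p \<le> B * N" by (simp add: B_def)
    note mat2_inv = DtN_proj_BD_mat2_inv[OF q0 p_def]
    have "u0 = proj_BD G (ringG D) (fst p)"
      using inj_onD[OF DtN_inj _ mat2_inv(1) u0] mat2_inv(2) by (simp add: q0_def)
    moreover have "fst p \<in> Domain G" using p(1) by (simp add: mem_Times_iff)
    ultimately have "graph_norm G u0 \<le> graph_norm G (fst p)"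
      using graph_norm_proj_BD_le[OF lin_op_G lin_op_ringG closed_ringG ringG_subset_G] by simp
    also have "\<dots> \<le> norm (fst p) + L * (norm (snd p) + norm q0)"
      using norm_Pair_le[of "fst p" "inv a (snd p + q0)"] L(2)[of "snd p + q0"]
        norm_triangle_ineq[of "snd p" q0] L(1)
      by (simp add: graph_norm_eq_norm mat2_inv(3)) (smt (verit) mult_left_mono)
    also have "\<dots> \<le> B * N + L * (B * N + N)"
      using P norm_fst_le[of "fst p" "snd p"] norm_snd_le[where x = "fst p" and y = "snd p"] norm_fst_le[of q0 "op_app D q0"] L(1)
      by (intro add_mono mult_left_mono) (simp_all add: N_def graph_norm_eq_norm)
    also have "\<dots> = (B + L * (B + 1)) * N" by (simp add: algebra_simps)
    finally show ?thesis by (simp add: N_def q0_def)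
  qed
  then show ?thesis by blast
qed

end

theorem theorem2p17:
  fixes G :: "('a::chilbert \<times> 'b::chilbert) set"
    and D :: "('b \<times> 'a) set"
    and a :: "'b \<Rightarrow> 'b"
    and m :: "'a \<Rightarrow> 'a"
  assumes "closed_op G" and "densely_defined G"
    and "closed_op D" and "densely_defined D"
    and "neg_op (adj G) \<subseteq> D"
    and "bounded_clop a" and "coercive a"
    and "bounded_clop m" and "coercive m"
  shows
    \<comment> \<open>Lambda is a bounded (complex-linear) operator BD(G) -> BD(D) ...\<close>
    "(\<forall>u\<in>BD G (ringG D). \<forall>v\<in>BD G (ringG D). DtN G D a m (u + v) = DtN G D a m u + DtN G D a m v)
     \<and> (\<forall>c. \<forall>u\<in>BD G (ringG D). DtN G D a m (c *\<^sub>C u) = c *\<^sub>C DtN G D a m u)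
     \<and> (\<exists>C. \<forall>u\<in>BD G (ringG D). graph_norm D (DtN G D a m u) \<le> C * graph_norm G u)
     \<comment> \<open>... which is invertible (bijective with bounded inverse) ...\<close>
     \<and> bij_betw (DtN G D a m) (BD G (ringG D)) (BD D (ringD G))
     \<and> (\<exists>C. \<forall>u\<in>BD G (ringG D). graph_norm G u \<le> C * graph_norm D (DtN G D a m u))
     \<comment> \<open>the two block operator matrices are invertible ...\<close>
     \<and> bij_betw (mat1 G D a m) (Domain (ringG D) \<times> Domain D) UNIV
     \<and> (\<exists>C. \<forall>p\<in>Domain (ringG D) \<times> Domain D. norm p \<le> C * norm (mat1 G D a m p))
     \<and> bij_betw (mat2 G D a m) (Domain G \<times> Domain (ringD G)) UNIV
     \<and> (\<exists>C. \<forall>p\<in>Domain G \<times> Domain (ringD G). norm p \<le> C * norm (mat2 G D a m p))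
     \<comment> \<open>... and the representation formulas hold\<close>
     \<and> (\<forall>u0\<in>BD G (ringG D). DtN G D a m u0 =
          proj_BD D (ringD G)
            (snd (the_inv_into (Domain (ringG D) \<times> Domain D) (mat1 G D a m)
                   (- m u0, op_app G u0))))
     \<and> (\<forall>q0\<in>BD D (ringD G). the_inv_into (BD G (ringG D)) (DtN G D a m) q0 =
          proj_BD G (ringG D)
            (fst (the_inv_into (Domain G \<times> Domain (ringD G)) (mat2 G D a m)
                   (op_app D q0, - inv a q0))))"
proof -
  interpret dtn_setting G D a m
    using assms by unfold_locales
  have Domain_G: "u \<in> Domain G" if "u \<in> BD G (ringG D)" for u
    using that BD_G_subset by blast
  have "\<exists>C. \<forall>p\<in>Domain (ringG D) \<times> Domain D. norm p \<le> C * norm (mat1 G D a m p)"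
    and "\<exists>C. \<forall>p\<in>Domain G \<times> Domain (ringD G). norm p \<le> C * norm (mat2 G D a m p)"
    using mat1_bounded_below mat2_bounded_below by blast+
  then show ?thesis
    by (intro conjI ballI allI DtN_add DtN_scaleC DtN_bounded DtN_bij DtN_inv_bounded
        mat1_bij mat2_bij DtN_eq_mat1_inv DtN_inv_eq_mat2_inv Domain_G)
qed

end
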